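(* Let $n\ge 2$ be an integer. For $i=1,2$ let $X_{i1},\dots,X_{in}$ be a random sample from the density $\frac{1}{\sigma}e^{-(x-\mu_i)/\sigma}$, $x\ge\mu_i$, the two samples independent, $\underline{\theta}=(\mu_1,\mu_2,\sigma)\in\mathbb{R}^2\times(0,\infty)$. Let $X_i=\min_jX_{ij}$, $S=\sum_{i=1}^2\sum_{j=1}^n(X_{ij}-X_i)$, $Z_1=\min\{X_1,X_2\}$, $\mu_S=\mu_1I(X_1\le X_2)+\mu_2I(X_2<X_1)$, $\mu=n(\max\{\mu_1,\mu_2\}-\min\{\mu_1,\mu_2\})/\sigma$. For $c\in\mathbb{R}$ let $d_c=Z_1-cS$ and $\mathcal{D}_2=\{d_c:c\in\mathbb{R}\}$. The risk $R(\underline{\theta},d_c)=\mathbb{E}_{\underline{\theta}}\left[\left(\frac{d_c-\mu_S}{\sigma}\right)^2\right]$ depends on $\underline{\theta}$ only through $\mu\ge0$; write it $R_\mu(d_c)$. Let $k_0=\frac{1}{2n(2n-1)}$ and $k_2=\frac{1}{n(2n-1)}$. (a) Every $d_c$ with $c\in[k_0,k_2]$ is admissible within $\mathcal{D}_2$, and every $d_c$ with $c\in(-\infty,k_0)\cup(k_2,\infty)$ is inadmissible; more precisely, if $-\infty<b<c\le k_0$ or $k_2\le c<b<\infty$, then $R_\mu(d_c)<R_\mu(d_b)$ for all $\mu\ge0$. (b) The estimator $d_{k_2}$ is minimax within $\mathcal{D}_2$, i.e. $\sup_{\mu\ge0}R_\mu(d_{k_2})=\inf_{c\in\mathbb{R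}}\sup_{\mu\ge0}R_\mu(d_c)$.
   Context: $I(A)$ is the indicator of $A$. An estimator in $\mathcal{D}_2$ is admissible within $\mathcal{D}_2$ if no other estimator in $\mathcal{D}_2$ has risk $\le$ its risk for all $\mu\ge0$ with strict inequality for some $\mu$. *)

theory Defs
  imports "HOL-Probability.Probability"
begin

definition shexp_density :: "real \<Rightarrow> real \<Rightarrow> real \<Rightarrow> real" where
  "shexp_density mu sg x = (if x < mu then 0 else (1 / sg) * exp (- (x - mu) / sg))"

definition sample_law :: "nat \<Rightarrow> real \<Rightarrow> real \<Rightarrow> real \<Rightarrow> ((nat \<times> nat) \<Rightarrow> real) measure" where
  "sample_law n mu1 mu2 sg =
     PiM ({1,2} \<times> {..<n})
       (\<lambda>(i,j). density lborel (\<lambda>x. ennreal (shexp_density (if i = 1 then mu1 else mu2) sg x)))"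

definition Xmin :: "nat \<Rightarrow> ((nat \<times> nat) \<Rightarrow> real) \<Rightarrow> nat \<Rightarrow> real" where
  "Xmin n \<omega> i = Min ((\<lambda>j. \<omega> (i,j)) ` {..<n})"

definition Sstat :: "nat \<Rightarrow> ((nat \<times> nat) \<Rightarrow> real) \<Rightarrow> real" where
  "Sstat n \<omega> = (\<Sum>i\<in>{1,2}. \<Sum>j<n. (\<omega> (i,j) - Xmin n \<omega> i))"

definition Z1 :: "nat \<Rightarrow> ((nat \<times> nat) \<Rightarrow> real) \<Rightarrow> real" where
  "Z1 n \<omega> = min (Xmin n \<omega> 1) (Xmin n \<omega> 2)"

definition muS :: "nat \<Rightarrow> real \<Rightarrow> real \<Rightarrow> ((nat \<times> nat) \<Rightarrow> real) \<Rightarrow> real" where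
  "muS n mu1 mu2 \<omega> = (if Xmin n \<omega> 1 \<le> Xmin n \<omega> 2 then mu1 else mu2)"

definition d_est :: "nat \<Rightarrow> real \<Rightarrow> ((nat \<times> nat) \<Rightarrow> real) \<Rightarrow> real" where
  "d_est n c \<omega> = Z1 n \<omega> - c * Sstat n \<omega>"

definition risk :: "nat \<Rightarrow> real \<Rightarrow> real \<Rightarrow> real \<Rightarrow> real \<Rightarrow> real" where
  "risk n c mu1 mu2 sg =
     (\<integral>\<omega>. ((d_est n c \<omega> - muS n mu1 mu2 \<omega>) / sg)\<^sup>2 \<partial>sample_law n mu1 mu2 sg)"

definition mu_param :: "nat \<Rightarrow> real \<Rightarrow> real \<Rightarrow> real \<Rightarrow> real" where
  "mu_param n mu1 mu2 sg = real n * (max mu1 mu2 - min mu1 mu2) / sg"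

text \<open>R_mu(d_c): the risk at a representative parameter with mu_param = m.\<close>
definition Rmu :: "nat \<Rightarrow> real \<Rightarrow> real \<Rightarrow> real" where
  "Rmu n c m = risk n c 0 (m / real n) 1"

definition admissible_D2 :: "nat \<Rightarrow> real \<Rightarrow> bool" where
  "admissible_D2 n c \<longleftrightarrow>
     \<not> (\<exists>b. (\<forall>m\<ge>0. Rmu n b m \<le> Rmu n c m) \<and> (\<exists>m\<ge>0. Rmu n b m < Rmu n c m))"

definition k0 :: "nat \<Rightarrow> real" where
  "k0 n = 1 / (2 * real n * (2 * real n - 1))"

definition k2 :: "nat \<Rightarrow> real" where
  "k2 n = 1 / (real n * (2 * real n - 1))"

end

(*
  Everything is measured in units of sg.  The minimum of a sample of k shifted exponentials
  with scale sg is again shifted exponential, with scale sg / k.  Integrating out one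
  coordinate of the sample at a time turns the excess of that coordinate over the sample
  minimum into a positive part, which gives E[S phi(M)] = (k - 1) sg E[phi(M)] and
  E[S^2] = k (k - 1) sg^2 for the minimum M and the spread S of the sample: in effect, M and S
  are independent.  Conditioning on the first sample and then integrating it out, the risk
  of d_c becomes the closed form

    R_mu(d_c) = G2(mu) / n^2 - 4 c (n - 1) G1(mu) / n + 2 c^2 (n - 1) (2 n - 1),

  where G1 = moment1 and G2 = moment2, i.e. G1(mu) = 1 - e^(-mu) (1 + mu) / 2 and
  G2(mu) = 2 - e^(-mu) (mu^2 + 3 mu + 3) / 2.
  Hence R_mu(d_c) - R_mu(d_b) = 2 (n - 1) (c - b) ((2 n - 1) (c + b) - 2 G1(mu) / n).  Since G1
  increases from 1/2 at mu = 0 to 1 as mu tends to infinity, the last factor has a fixed sign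
  when b and c are both at most k0 or both at least k2, while for c in [k0, k2] every b > c
  loses to c at mu = 0 and every b < c loses to c for large mu.  Finally, sup_mu R_mu(d_c) is
  at least the limit of R_mu(d_c) at infinity, a quadratic in c minimised at c = k2, and
  R_mu(d_k2) never exceeds its limit.
*)
theory Submission
  imports Defs "HOL-Real_Asymp.Real_Asymp"
begin

section \<open>Expectations under the standard exponential law\<close>

lemma exponential_density_1: "exponential_density 1 t = (if t < 0 then 0 else exp (- t))"
  by (simp add: exponential_density_def)

definition exp1_expect :: "(real \<Rightarrow> real) \<Rightarrow> real" where
  "exp1_expect g = (\<integral>t. exponential_density 1 t * g t \<partial>lborel)"

definition has_exp1_expect :: "(real \<Rightarrow> real) \<Rightarrow> real \<Rightarrow> bool" where
  "has_exp1_expect g v \<longleftrightarrow> has_bochner_integral lborel (\<lambda>t. exponential_density 1 t * g t) v"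

lemma has_exp1_expect_iff:
  "has_exp1_expect g v \<longleftrightarrow> integrable lborel (\<lambda>t. exponential_density 1 t * g t) \<and> exp1_expect g = v"
  unfolding has_exp1_expect_def exp1_expect_def has_bochner_integral_iff ..

lemma has_exp1_expectD: "has_exp1_expect g v \<Longrightarrow> exp1_expect g = v"
  by (simp add: has_exp1_expect_iff)

lemma exp1_expect_cong: "(\<And>t. 0 \<le> t \<Longrightarrow> g t = h t) \<Longrightarrow> exp1_expect g = exp1_expect h"
  unfolding exp1_expect_def by (intro Bochner_Integration.integral_cong) (auto simp: exponential_density_1)

lemma exp1_expect_cmult: "exp1_expect (\<lambda>t. c * g t) = c * exp1_expect g"
  unfolding exp1_expect_def by (simp add: mult.left_commute)

lemma has_exp1_expect_cong:
  "has_exp1_expect f a \<Longrightarrow> (\<And>t. 0 \<le> t \<Longrightarrow> f t = g t) \<Longrightarrow> a = b \<Longrightarrow> has_exp1_expect g b"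
  unfolding has_exp1_expect_def
  by (erule has_bochner_integral_cong[THEN iffD1, rotated -1]) (auto simp: exponential_density_1)

lemma has_exp1_expect_add:
  "has_exp1_expect f a \<Longrightarrow> has_exp1_expect g b \<Longrightarrow> has_exp1_expect (\<lambda>t. f t + g t) (a + b)"
  unfolding has_exp1_expect_def by (drule (1) has_bochner_integral_add) (simp add: algebra_simps)

lemma has_exp1_expect_cmult: "has_exp1_expect f a \<Longrightarrow> has_exp1_expect (\<lambda>t. c * f t) (c * a)"
proof -
  assume "has_exp1_expect f a"
  then have "has_bochner_integral lborel (\<lambda>t. c * (exponential_density 1 t * f t)) (c * a)"
    unfolding has_exp1_expect_def by (rule has_bochner_integral_mult_right)
  then show ?thesis unfolding has_exp1_expect_def by (simp add: mult.left_commute)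
qed

lemma has_exp1_expect_power: "has_exp1_expect (\<lambda>t. t ^ k) (fact k)"
  unfolding has_exp1_expect_def
proof (rule has_bochner_integral_nn_integral)
  show "(\<integral>\<^sup>+ t. ennreal (exponential_density 1 t * t ^ k) \<partial>lborel) = ennreal (fact k)"
    using nn_integral_erlang_ith_moment[of 1 0 k] by simp
qed (auto simp: exponential_density_1)

lemma has_exp1_expect_const: "has_exp1_expect (\<lambda>t. c) c"
  using has_exp1_expect_cmult[OF has_exp1_expect_power[of 0], of c] by simp

lemma integrable_exp1_power: "integrable lborel (\<lambda>t. exponential_density 1 t * t ^ k)"
  using has_exp1_expect_power[of k] unfolding has_exp1_expect_def by (rule integrable.intros)

lemma integrable_exp1_quadratic_bound:
  assumes [measurable]: "g \<in> borel_measurable borel"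
    and bound: "\<And>t. 0 \<le> t \<Longrightarrow> \<bar>g t\<bar> \<le> A + B * t\<^sup>2"
  shows "integrable lborel (\<lambda>t. exponential_density 1 t * g t)"
proof (rule Bochner_Integration.integrable_bound)
  show "integrable lborel (\<lambda>t. A * (exponential_density 1 t * t ^ 0) + B * (exponential_density 1 t * t ^ 2))"
    by (intro Bochner_Integration.integrable_add Bochner_Integration.integrable_mult_right integrable_exp1_power)
  show "AE t in lborel. norm (exponential_density 1 t * g t)
          \<le> norm (A * (exponential_density 1 t * t ^ 0) + B * (exponential_density 1 t * t ^ 2))"
  proof (intro AE_I2)
    fix t :: real
    show "norm (exponential_density 1 t * g t)
          \<le> norm (A * (exponential_density 1 t * t ^ 0) + B * (exponential_density 1 t * t ^ 2))"
    proof (cases "t < 0")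
      case False
      then have "exp (- t) * \<bar>g t\<bar> \<le> exp (- t) * (A + B * t\<^sup>2)"
        using bound by (intro mult_left_mono) auto
      then show ?thesis using False by (simp add: exponential_density_1 abs_mult algebra_simps)
    qed (simp add: exponential_density_1)
  qed
qed measurable

lemma exp1_expect_scale:
  assumes c: "0 < c"
  shows "(\<integral>t. exponential_density 1 t * (g t * exp (- (c - 1) * t)) \<partial>lborel)
       = exp1_expect (\<lambda>s. g (s / c)) / c"
proof -
  let ?f = "\<lambda>t. exponential_density 1 t * (g t * exp (- (c - 1) * t))"
  have "integral\<^sup>L lborel ?f = \<bar>1/c\<bar> *\<^sub>R (\<integral>x. ?f (0 + (1/c) * x) \<partial>lborel)"
    using c by (intro lborel_integral_real_affine) auto
  also have "(\<lambda>x. ?f (0 + (1/c) * x)) = (\<lambda>x. exponential_density 1 x * g (x / c))"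
  proof
    fix x :: real
    have "- (x / c) + - (c - 1) * (x / c) = - x" using c by (simp add: field_simps)
    then have "exp (- (x / c)) * exp (- (c - 1) * (x / c)) = exp (- x)"
      by (simp add: exp_add[symmetric])
    moreover have "x / c < 0 \<longleftrightarrow> x < 0" using c by (simp add: divide_less_0_iff)
    ultimately show "?f (0 + (1/c) * x) = exponential_density 1 x * g (x / c)"
      by (auto simp: exponential_density_1 algebra_simps)
  qed
  finally show ?thesis using c by (simp add: exp1_expect_def)
qed

lemma has_exp1_expect_shift:
  assumes a: "0 \<le> a" and d: "has_exp1_expect (\<lambda>u. d (a + u)) v"
  shows "has_exp1_expect (\<lambda>t. if a \<le> t then d t else 0) (exp (- a) * v)"
proof -
  let ?f = "\<lambda>t. exponential_density 1 t * (if a \<le> t then d t else 0)"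
  have shifted: "(\<lambda>x. ?f (a + 1 * x)) = (\<lambda>x. exp (- a) * (exponential_density 1 x * d (a + x)))"
    using a by (auto simp: exponential_density_1 exp_add[symmetric])
  have "has_bochner_integral lborel (\<lambda>x. exp (- a) * (exponential_density 1 x * d (a + x))) (exp (- a) * v)"
    using d unfolding has_exp1_expect_def by (rule has_bochner_integral_mult_right)
  then have "has_bochner_integral lborel (\<lambda>x. ?f (a + 1 * x)) (exp (- a) * v)"
    by (simp only: shifted)
  then have "integrable lborel ?f" and "integral\<^sup>L lborel ?f = exp (- a) * v"
    using lborel_integrable_real_affine_iff[of 1 ?f a] lborel_integral_real_affine[of 1 ?f a]
    by (auto simp: has_bochner_integral_iff)
  then show ?thesis by (simp add: has_bochner_integral_iff has_exp1_expect_def)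
qed

lemma has_exp1_expect_power_exp: "has_exp1_expect (\<lambda>t. t ^ k * exp (- t)) (fact k / 2 ^ (k + 1))"
proof -
  have "integrable lborel (\<lambda>t. exponential_density 1 t * (t ^ k * exp (- t)))"
  proof (rule Bochner_Integration.integrable_bound[OF integrable_exp1_power[of k]])
    show "AE t in lborel. norm (exponential_density 1 t * (t ^ k * exp (- t)))
            \<le> norm (exponential_density 1 t * t ^ k)"
      by (intro AE_I2) (auto simp: exponential_density_1 abs_mult mult_left_le)
  qed measurable
  moreover have "exp1_expect (\<lambda>t. t ^ k * exp (- t)) = exp1_expect (\<lambda>s. (s / 2) ^ k) / 2"
    using exp1_expect_scale[of 2 "\<lambda>t. t ^ k"] by (simp add: exp1_expect_def)
  moreover have "exp1_expect (\<lambda>s. (s / 2) ^ k) = fact k / 2 ^ k"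
    using has_exp1_expectD[OF has_exp1_expect_cmult[OF has_exp1_expect_power, of "1 / 2 ^ k" k]]
    by (simp add: power_divide)
  ultimately show ?thesis by (simp add: has_exp1_expect_iff)
qed

lemma has_exp1_expect_quadratic_exp:
  "has_exp1_expect (\<lambda>u. p0 + p1 * u + p2 * u\<^sup>2 + (q0 + q1 * u + q2 * u\<^sup>2) * exp (- u))
     (p0 + p1 + 2 * p2 + q0 / 2 + q1 / 4 + q2 / 4)"
proof -
  have "has_exp1_expect
          (\<lambda>u. p0 * u ^ 0 + p1 * u ^ 1 + p2 * u ^ 2
               + (q0 * (u ^ 0 * exp (- u)) + q1 * (u ^ 1 * exp (- u)) + q2 * (u ^ 2 * exp (- u))))
          (p0 * fact 0 + p1 * fact 1 + p2 * fact 2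
               + (q0 * (fact 0 / 2 ^ (0 + 1)) + q1 * (fact 1 / 2 ^ (1 + 1)) + q2 * (fact 2 / 2 ^ (2 + 1))))"
    by (intro has_exp1_expect_add has_exp1_expect_cmult has_exp1_expect_power has_exp1_expect_power_exp)
  then show ?thesis
    by (rule has_exp1_expect_cong) (auto simp: algebra_simps fact_numeral)
qed

lemma exp1_expect_exp_scale:
  assumes r: "1 < r"
  shows "exp1_expect (\<lambda>t. g (t / (r - 1)) * exp (- (t / (r - 1)))) = (r - 1) / r * exp1_expect (\<lambda>s. g (s / r))"
proof -
  let ?c = "r / (r - 1)"
  have c: "0 < ?c" using r by simp
  have "exp1_expect (\<lambda>t. g (t / (r - 1)) * exp (- (t / (r - 1))))
      = (\<integral>t. exponential_density 1 t * (g (t / (r - 1)) * exp (- (?c - 1) * t)) \<partial>lborel)"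
    unfolding exp1_expect_def using r by (intro Bochner_Integration.integral_cong) (auto simp: field_simps)
  also have "\<dots> = exp1_expect (\<lambda>s. g ((s / ?c) / (r - 1))) / ?c"
    by (rule exp1_expect_scale[OF c])
  also have "(\<lambda>s. g ((s / ?c) / (r - 1))) = (\<lambda>s. g (s / r))"
  proof
    fix s :: real
    have "r \<noteq> 0" "r - 1 \<noteq> 0" "r * r - r \<noteq> 0" using r by (auto simp: algebra_simps)
    then have "(s / ?c) / (r - 1) = s / r" by (simp add: field_simps)
    then show "g ((s / ?c) / (r - 1)) = g (s / r)" by simp
  qed
  finally show ?thesis by simp
qed

lemma exp1_expect_exp_div:
  "1 < r \<Longrightarrow> exp1_expect (\<lambda>t. exp (- (t / (r - 1)))) = (r - 1) / r"
  using exp1_expect_exp_scale[of r "\<lambda>_. 1"] has_exp1_expectD[OF has_exp1_expect_const[of 1]] by simp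

section \<open>The error of the selected minimum in standard units\<close>

text \<open>With \<open>s = n (X1 - mu1) / sg\<close>, \<open>t = n (X2 - mu2) / sg\<close> and \<open>\<delta> = n (mu2 - mu1) / sg\<close>, the
  error \<open>Z1 - mu_S\<close> equals \<open>sg / n * min_error \<delta> s t\<close> (\<open>selection_error_eq_min_error\<close>), where
  \<open>s\<close> and \<open>t\<close> are independent standard exponentials.  The functions \<open>cond_moment1\<close> and
  \<open>cond_moment2\<close> are the first two moments in \<open>t\<close>, and \<open>moment1 \<bar>\<delta>\<bar>\<close>, \<open>moment2 \<bar>\<delta>\<bar>\<close>
  those in both variables.\<close>

definition min_error :: "real \<Rightarrow> real \<Rightarrow> real \<Rightarrow> real" where
  "min_error \<delta> s t = (if s \<le> t + \<delta> then s else t)"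

definition cond_moment1 :: "real \<Rightarrow> real \<Rightarrow> real" where
  "cond_moment1 \<delta> s = (if s - \<delta> \<le> 0 then s else 1 + exp (- (s - \<delta>)) * (\<delta> - 1))"

definition cond_moment2 :: "real \<Rightarrow> real \<Rightarrow> real" where
  "cond_moment2 \<delta> s = (if s - \<delta> \<le> 0 then s\<^sup>2 else 2 + exp (- (s - \<delta>)) * (s\<^sup>2 - (s - \<delta>)\<^sup>2 - 2 * (s - \<delta>) - 2))"

lemma has_exp1_expect_min_error: "has_exp1_expect (\<lambda>t. min_error \<delta> s t) (cond_moment1 \<delta> s)"
proof (cases "s - \<delta> \<le> 0")
  case True
  show ?thesis
    by (rule has_exp1_expect_cong[OF has_exp1_expect_const[of s]]) (use True in \<open>auto simp: min_error_def cond_moment1_def\<close>)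
next
  case False
  let ?a = "s - \<delta>"
  have "has_exp1_expect (\<lambda>t. t ^ 1 + (if ?a \<le> t then s - t else 0)) (fact 1 + exp (- ?a) * (s - ?a - 1))"
  proof (intro has_exp1_expect_add has_exp1_expect_power has_exp1_expect_shift)
    show "0 \<le> ?a" using False by simp
    show "has_exp1_expect (\<lambda>u. s - (?a + u)) (s - ?a - 1)"
      by (rule has_exp1_expect_cong[OF has_exp1_expect_quadratic_exp[of "s - ?a" "-1" 0 0 0 0]]) auto
  qed
  then show ?thesis
    by (rule has_exp1_expect_cong) (use False in \<open>auto simp: min_error_def cond_moment1_def\<close>)
qed

lemma has_exp1_expect_min_error_sq: "has_exp1_expect (\<lambda>t. (min_error \<delta> s t)\<^sup>2) (cond_moment2 \<delta> s)"
proof (cases "s - \<delta> \<le> 0")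
  case True
  show ?thesis
    by (rule has_exp1_expect_cong[OF has_exp1_expect_const[of "s\<^sup>2"]]) (use True in \<open>auto simp: min_error_def cond_moment2_def\<close>)
next
  case False
  let ?a = "s - \<delta>"
  have "has_exp1_expect (\<lambda>t. t ^ 2 + (if ?a \<le> t then s\<^sup>2 - t\<^sup>2 else 0)) (fact 2 + exp (- ?a) * (s\<^sup>2 - ?a\<^sup>2 - 2 * ?a - 2))"
  proof (intro has_exp1_expect_add has_exp1_expect_power has_exp1_expect_shift)
    show "0 \<le> ?a" using False by simp
    show "has_exp1_expect (\<lambda>u. s\<^sup>2 - (?a + u)\<^sup>2) (s\<^sup>2 - ?a\<^sup>2 - 2 * ?a - 2)"
      by (rule has_exp1_expect_cong[OF has_exp1_expect_quadratic_exp[of "s\<^sup>2 - ?a\<^sup>2" "-2 * ?a" "-1" 0 0 0]])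
         (auto simp: power2_eq_square algebra_simps)
  qed
  then show ?thesis
    by (rule has_exp1_expect_cong) (use False in \<open>auto simp: min_error_def cond_moment2_def fact_numeral\<close>)
qed

definition moment1 :: "real \<Rightarrow> real" where
  "moment1 m = 1 - exp (- m) * (1 + m) / 2"

definition moment2 :: "real \<Rightarrow> real" where
  "moment2 m = 2 - exp (- m) * (m\<^sup>2 + 3 * m + 3) / 2"

lemma has_exp1_expect_cond_moment1: "has_exp1_expect (cond_moment1 \<delta>) (moment1 \<bar>\<delta>\<bar>)"
proof (cases "0 \<le> \<delta>")
  case True
  have "has_exp1_expect (\<lambda>s. s ^ 1 + (if \<delta> \<le> s then cond_moment1 \<delta> s - s else 0)) (fact 1 + exp (- \<delta>) * (- (\<delta> + 1) / 2))"
  proof (intro has_exp1_expect_add has_exp1_expect_power has_exp1_expect_shift)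
    show "0 \<le> \<delta>" by fact
    show "has_exp1_expect (\<lambda>u. cond_moment1 \<delta> (\<delta> + u) - (\<delta> + u)) (- (\<delta> + 1) / 2)"
      by (rule has_exp1_expect_cong[OF has_exp1_expect_quadratic_exp[of "1 - \<delta>" "-1" 0 "\<delta> - 1" 0 0]])
         (auto simp: cond_moment1_def field_simps)
  qed
  then show ?thesis
    by (rule has_exp1_expect_cong) (use True in \<open>auto simp: cond_moment1_def moment1_def field_simps\<close>)
next
  case False
  have e: "exp (- (s - \<delta>)) = exp \<delta> * exp (- s)" "exp (\<delta> - s) = exp \<delta> * exp (- s)" for s
    by (simp_all add: exp_add[symmetric])
  show ?thesis
    by (rule has_exp1_expect_cong[OF has_exp1_expect_quadratic_exp[of 1 0 0 "exp \<delta> * (\<delta> - 1)" 0 0]])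
       (use False in \<open>auto simp: cond_moment1_def moment1_def e field_simps\<close>)
qed

lemma has_exp1_expect_cond_moment2: "has_exp1_expect (cond_moment2 \<delta>) (moment2 \<bar>\<delta>\<bar>)"
proof (cases "0 \<le> \<delta>")
  case True
  have "has_exp1_expect (\<lambda>s. s ^ 2 + (if \<delta> \<le> s then cond_moment2 \<delta> s - s\<^sup>2 else 0)) (fact 2 + exp (- \<delta>) * (- (\<delta>\<^sup>2 + 3 * \<delta> + 3) / 2))"
  proof (intro has_exp1_expect_add has_exp1_expect_power has_exp1_expect_shift)
    show "0 \<le> \<delta>" by fact
    show "has_exp1_expect (\<lambda>u. cond_moment2 \<delta> (\<delta> + u) - (\<delta> + u)\<^sup>2) (- (\<delta>\<^sup>2 + 3 * \<delta> + 3) / 2)"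
      by (rule has_exp1_expect_cong[OF has_exp1_expect_quadratic_exp[of "2 - \<delta>\<^sup>2" "- 2 * \<delta>" "-1" "\<delta>\<^sup>2 - 2" "2 * \<delta> - 2" 0]])
         (auto simp: cond_moment2_def field_simps power2_eq_square)
  qed
  then show ?thesis
    by (rule has_exp1_expect_cong) (use True in \<open>auto simp: cond_moment2_def moment2_def field_simps power2_eq_square fact_numeral\<close>)
next
  case False
  have e: "exp (- (s - \<delta>)) = exp \<delta> * exp (- s)" "exp (\<delta> - s) = exp \<delta> * exp (- s)" for s
    by (simp_all add: exp_add[symmetric])
  show ?thesis
    by (rule has_exp1_expect_cong[OF has_exp1_expect_quadratic_exp[of 2 0 0 "exp \<delta> * (- \<delta>\<^sup>2 + 2 * \<delta> - 2)" "exp \<delta> * (2 * \<delta> - 2)" 0]])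
       (use False in \<open>auto simp: cond_moment2_def moment2_def e field_simps power2_eq_square\<close>)
qed

section \<open>Samples from shifted exponential laws\<close>

definition exp1_measure :: "real measure" where
  "exp1_measure = density lborel (\<lambda>x. ennreal (exponential_density 1 x))"

definition shexp_measure :: "real \<Rightarrow> real \<Rightarrow> real measure" where
  "shexp_measure mu sg = density lborel (\<lambda>x. ennreal (shexp_density mu sg x))"

abbreviation shexp_sample :: "'i set \<Rightarrow> real \<Rightarrow> real \<Rightarrow> ('i \<Rightarrow> real) measure" where
  "shexp_sample J mu sg \<equiv> PiM J (\<lambda>_. shexp_measure mu sg)"

lemma sets_exp1_measure[simp, measurable_cong]: "sets exp1_measure = sets borel"
  by (simp add: exp1_measure_def)

lemma sets_shexp_measure[simp, measurable_cong]: "sets (shexp_measure mu sg) = sets borel"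
  by (simp add: shexp_measure_def)

lemma prob_space_exp1_measure: "prob_space exp1_measure"
  unfolding exp1_measure_def by (rule prob_space_exponential_density) simp

lemma (in prob_space) distributed_affine_exponential:
  assumes X: "distributed M lborel X (exponential_density l)" and l: "0 < l" and sg: "0 < sg"
  shows "distributed M lborel (\<lambda>\<omega>. mu + sg * X \<omega>) (shexp_density mu (sg / l))"
proof -
  have "(\<lambda>x. ennreal (exponential_density l ((x - mu) / sg)) / ennreal \<bar>sg\<bar>)
      = (\<lambda>x. ennreal (shexp_density mu (sg / l) x))"
  proof
    fix x :: real
    show "ennreal (exponential_density l ((x - mu) / sg)) / ennreal \<bar>sg\<bar> = ennreal (shexp_density mu (sg / l) x)"
      using sg l by (subst divide_ennreal)
        (auto simp: exponential_density_def shexp_density_def divide_less_0_iff field_simps)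
  qed
  then show ?thesis
    using distributed_affine[OF X, of sg mu] sg by simp
qed

lemma shexp_measure_eq_distr:
  assumes sg: "0 < sg"
  shows "shexp_measure mu sg = distr exp1_measure lborel (\<lambda>t. mu + sg * t)"
proof -
  interpret prob_space exp1_measure by (rule prob_space_exp1_measure)
  have "distributed exp1_measure lborel (\<lambda>t. t) (exponential_density 1)"
    unfolding distributed_def by (auto simp: exp1_measure_def intro!: distr_id2)
  from distributed_affine_exponential[OF this _ sg, of mu] show ?thesis
    by (simp add: distributed_def shexp_measure_def)
qed

lemma prob_space_shexp_measure: "0 < sg \<Longrightarrow> prob_space (shexp_measure mu sg)"
  using shexp_measure_eq_distr[of sg mu]
    prob_space.prob_space_distr[OF prob_space_exp1_measure, of "\<lambda>t. mu + sg * t" lborel]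
  by simp

lemma integral_shexp_measure:
  assumes sg: "0 < sg" and [measurable]: "f \<in> borel_measurable borel"
  shows "integral\<^sup>L (shexp_measure mu sg) f = exp1_expect (\<lambda>t. f (mu + sg * t))"
  unfolding shexp_measure_eq_distr[OF sg] exp1_expect_def
  by (simp add: integral_distr) (simp add: exp1_measure_def integral_density)

lemma integrable_shexp_measure_iff:
  assumes sg: "0 < sg" and [measurable]: "f \<in> borel_measurable borel"
  shows "integrable (shexp_measure mu sg) f \<longleftrightarrow> integrable lborel (\<lambda>t. exponential_density 1 t * f (mu + sg * t))"
  unfolding shexp_measure_eq_distr[OF sg]
  by (simp add: integrable_distr_eq) (simp add: exp1_measure_def integrable_density)

lemma integrable_shexp_measure_quadratic_bound:
  assumes sg: "0 < sg" and [measurable]: "g \<in> borel_measurable borel"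
    and bound: "\<And>y. \<bar>g y\<bar> \<le> A + B * y\<^sup>2" and B: "0 \<le> B"
  shows "integrable (shexp_measure mu sg) g"
proof -
  have "integrable lborel (\<lambda>t. exponential_density 1 t * g (mu + sg * t))"
  proof (rule integrable_exp1_quadratic_bound[where A="A + 2 * B * mu\<^sup>2" and B="2 * B * sg\<^sup>2"])
    fix t :: real
    have "(mu + sg * t)\<^sup>2 \<le> 2 * mu\<^sup>2 + 2 * sg\<^sup>2 * t\<^sup>2"
      using sum_power2_ge_zero[of "mu - sg * t" 0] by (simp add: power2_eq_square algebra_simps)
    then have "B * (mu + sg * t)\<^sup>2 \<le> B * (2 * mu\<^sup>2 + 2 * sg\<^sup>2 * t\<^sup>2)" using B by (rule mult_left_mono)
    then show "\<bar>g (mu + sg * t)\<bar> \<le> A + 2 * B * mu\<^sup>2 + 2 * B * sg\<^sup>2 * t\<^sup>2"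
      using bound[of "mu + sg * t"] by (simp add: algebra_simps)
  qed simp
  then show ?thesis using integrable_shexp_measure_iff[OF sg] by simp
qed

lemma integrable_shexp_measure_square: "0 < sg \<Longrightarrow> integrable (shexp_measure mu sg) (\<lambda>x. x\<^sup>2)"
  by (rule integrable_shexp_measure_quadratic_bound[of _ _ 0 1]) auto

definition pos_part_mean :: "real \<Rightarrow> real \<Rightarrow> real \<Rightarrow> real" where
  "pos_part_mean mu sg m = (if mu \<le> m then sg * exp (- ((m - mu) / sg)) else mu + sg - m)"

definition pos_part_sq_mean :: "real \<Rightarrow> real \<Rightarrow> real \<Rightarrow> real" where
  "pos_part_sq_mean mu sg m =
     (if mu \<le> m then 2 * sg\<^sup>2 * exp (- ((m - mu) / sg)) else (mu - m)\<^sup>2 + 2 * (mu - m) * sg + 2 * sg\<^sup>2)"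

lemma borel_measurable_pos_part_mean[measurable]: "pos_part_mean mu sg \<in> borel_measurable borel"
  unfolding pos_part_mean_def by measurable

lemma borel_measurable_pos_part_sq_mean[measurable]: "pos_part_sq_mean mu sg \<in> borel_measurable borel"
  unfolding pos_part_sq_mean_def by measurable

lemma integral_shexp_pos_part:
  assumes sg: "0 < sg"
  shows "integral\<^sup>L (shexp_measure mu sg) (\<lambda>y. max (y - m) 0) = pos_part_mean mu sg m"
proof -
  have "integral\<^sup>L (shexp_measure mu sg) (\<lambda>y. max (y - m) 0) = exp1_expect (\<lambda>t. max (mu + sg * t - m) 0)"
    by (rule integral_shexp_measure[OF sg]) simp
  also have "\<dots> = pos_part_mean mu sg m"
  proof (cases "mu \<le> m")
    case True
    let ?a = "(m - mu) / sg"
    have "exp1_expect (\<lambda>t. max (mu + sg * t - m) 0) = exp1_expect (\<lambda>t. if ?a \<le> t then sg * (t - ?a) else 0)"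
      using sg by (intro exp1_expect_cong) (auto simp: field_simps max_def)
    also have "\<dots> = exp (- ?a) * sg"
      using True sg
      by (intro has_exp1_expectD has_exp1_expect_shift
            has_exp1_expect_cong[OF has_exp1_expect_cmult[OF has_exp1_expect_power[of 1], of sg]]) auto
    finally show ?thesis using True by (simp add: pos_part_mean_def)
  next
    case False
    have "exp1_expect (\<lambda>t. max (mu + sg * t - m) 0) = exp1_expect (\<lambda>t. (mu - m) + sg * t + 0 * t\<^sup>2 + (0 + 0 * t + 0 * t\<^sup>2) * exp (- t))"
    proof (intro exp1_expect_cong)
      fix t :: real assume "0 \<le> t"
      then have "0 \<le> sg * t" using sg by simp
      then show "max (mu + sg * t - m) 0 = (mu - m) + sg * t + 0 * t\<^sup>2 + (0 + 0 * t + 0 * t\<^sup>2) * exp (- t)"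
        using False by (auto simp: max_def)
    qed
    also have "\<dots> = mu - m + sg"
      using has_exp1_expectD[OF has_exp1_expect_quadratic_exp[of "mu - m" sg 0 0 0 0]] by simp
    finally show ?thesis using False by (simp add: pos_part_mean_def)
  qed
  finally show ?thesis .
qed

lemma integral_shexp_pos_part_sq:
  assumes sg: "0 < sg"
  shows "integral\<^sup>L (shexp_measure mu sg) (\<lambda>y. (max (y - m) 0)\<^sup>2) = pos_part_sq_mean mu sg m"
proof -
  have "integral\<^sup>L (shexp_measure mu sg) (\<lambda>y. (max (y - m) 0)\<^sup>2) = exp1_expect (\<lambda>t. (max (mu + sg * t - m) 0)\<^sup>2)"
    by (rule integral_shexp_measure[OF sg]) simp
  also have "\<dots> = pos_part_sq_mean mu sg m"
  proof (cases "mu \<le> m")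
    case True
    let ?a = "(m - mu) / sg"
    have "exp1_expect (\<lambda>t. (max (mu + sg * t - m) 0)\<^sup>2) = exp1_expect (\<lambda>t. if ?a \<le> t then (sg * (t - ?a))\<^sup>2 else 0)"
    proof (intro exp1_expect_cong)
      fix t :: real
      have e: "sg * (t - ?a) = mu + sg * t - m" using sg by (simp add: field_simps)
      have "?a \<le> t \<longleftrightarrow> 0 \<le> mu + sg * t - m" using sg by (simp add: field_simps)
      then show "(max (mu + sg * t - m) 0)\<^sup>2 = (if ?a \<le> t then (sg * (t - ?a))\<^sup>2 else 0)"
        unfolding e by (auto simp: max_def)
    qed
    also have "\<dots> = exp (- ?a) * (sg\<^sup>2 * fact 2)"
      using True sg
      by (intro has_exp1_expectD has_exp1_expect_shift
            has_exp1_expect_cong[OF has_exp1_expect_cmult[OF has_exp1_expect_power[of 2], of "sg\<^sup>2"]])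
         (auto simp: power_mult_distrib)
    finally show ?thesis using True by (simp add: pos_part_sq_mean_def fact_numeral)
  next
    case False
    have "exp1_expect (\<lambda>t. (max (mu + sg * t - m) 0)\<^sup>2) = exp1_expect (\<lambda>t. (mu - m)\<^sup>2 + 2 * (mu - m) * sg * t + sg\<^sup>2 * t\<^sup>2 + (0 + 0 * t + 0 * t\<^sup>2) * exp (- t))"
    proof (intro exp1_expect_cong)
      fix t :: real assume "0 \<le> t"
      then have "0 \<le> sg * t" using sg by simp
      then have "max (mu + sg * t - m) 0 = mu - m + sg * t" using False by (auto simp: max_def)
      then show "(max (mu + sg * t - m) 0)\<^sup>2 = (mu - m)\<^sup>2 + 2 * (mu - m) * sg * t + sg\<^sup>2 * t\<^sup>2 + (0 + 0 * t + 0 * t\<^sup>2) * exp (- t)"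
        by (simp add: power2_eq_square algebra_simps)
    qed
    also have "\<dots> = (mu - m)\<^sup>2 + 2 * (mu - m) * sg + 2 * sg\<^sup>2"
      using has_exp1_expectD[OF has_exp1_expect_quadratic_exp[of "(mu - m)\<^sup>2" "2 * (mu - m) * sg" "sg\<^sup>2" 0 0 0]] by simp
    finally show ?thesis using False by (simp add: pos_part_sq_mean_def)
  qed
  finally show ?thesis .
qed

lemma measurable_PiM_component_borel:
  "i \<in> I \<Longrightarrow> sets (M i) = sets borel \<Longrightarrow> (\<lambda>\<omega>. \<omega> i) \<in> borel_measurable (PiM I M)"
  using measurable_component_singleton[of i I M] measurable_cong_sets[of "PiM I M" "PiM I M" "M i" borel]
  by simp

lemma integrable_PiM_component:
  fixes M :: "'i \<Rightarrow> 'a measure" and g :: "'a \<Rightarrow> real"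
  assumes P: "\<And>i. i \<in> I \<Longrightarrow> prob_space (M i)" and i: "i \<in> I" and g: "integrable (M i) g"
  shows "integrable (PiM I M) (\<lambda>\<omega>. g (\<omega> i))"
proof -
  have "integrable (distr (PiM I M) (M i) (\<lambda>\<omega>. \<omega> i)) g"
    using g distr_PiM_component[of I M i] P i by simp
  moreover have "g \<in> borel_measurable (M i)" using g by auto
  ultimately show ?thesis
    by (subst (asm) integrable_distr_eq) (auto intro: measurable_component_singleton[OF i])
qed

lemma indep_vars_PiM_components:
  assumes I: "I \<noteq> {}" and P: "\<And>i. i \<in> I \<Longrightarrow> prob_space (N i)"
  shows "prob_space.indep_vars (PiM I N) N (\<lambda>i \<omega>. \<omega> i) I"
proof -
  interpret prob_space "PiM I N" by (rule prob_space_PiM[OF P])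
  show ?thesis
  proof (subst indep_vars_iff_distr_eq_PiM'[OF I])
    show "random_variable (N i) (\<lambda>\<omega>. \<omega> i)" if "i \<in> I" for i
      using that by (rule measurable_component_singleton)
    have "distr (PiM I N) (PiM I N) (\<lambda>x. restrict x I) = distr (PiM I N) (PiM I N) (\<lambda>x. x)"
      by (intro distr_cong) (auto simp: space_PiM)
    also have "\<dots> = PiM I (\<lambda>i. distr (PiM I N) (N i) (\<lambda>\<omega>. \<omega> i))"
      using distr_PiM_component[of I N] P by (auto simp: distr_id2 intro!: PiM_cong)
    finally show "distr (PiM I N) (PiM I N) (\<lambda>x. restrict x I) = PiM I (\<lambda>i. distr (PiM I N) (N i) (\<lambda>\<omega>. \<omega> i))" .
  qed
qed

lemma integrable_PiM_quadratic_bound: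
  fixes M :: "'i \<Rightarrow> real measure" and f :: "('i \<Rightarrow> real) \<Rightarrow> real"
  assumes J: "finite J" and P: "\<And>j. j \<in> J \<Longrightarrow> prob_space (M j)"
    and square: "\<And>j. j \<in> J \<Longrightarrow> integrable (M j) (\<lambda>x. x\<^sup>2)"
    and f: "f \<in> borel_measurable (PiM J M)"
    and bound: "\<And>\<omega>. \<omega> \<in> space (PiM J M) \<Longrightarrow> \<bar>f \<omega>\<bar> \<le> C * (1 + (\<Sum>j\<in>J. \<bar>\<omega> j\<bar>))\<^sup>2"
  shows "integrable (PiM J M) f"
proof -
  interpret prob_space "PiM J M" by (intro prob_space_PiM P)
  let ?g = "\<lambda>\<omega>. 2 * \<bar>C\<bar> * (1 + real (card J) * (\<Sum>j\<in>J. (\<omega> j)\<^sup>2))"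
  have "integrable (PiM J M) (\<lambda>\<omega>. (\<omega> j)\<^sup>2)" if "j \<in> J" for j
    using P that square[OF that] by (rule integrable_PiM_component)
  then have g: "integrable (PiM J M) ?g"
    by (intro Bochner_Integration.integrable_mult_right Bochner_Integration.integrable_add
          Bochner_Integration.integrable_sum integrable_const) auto
  have "AE \<omega> in PiM J M. norm (f \<omega>) \<le> norm (?g \<omega>)"
  proof (intro AE_I2 impI)
    fix \<omega> assume \<omega>: "\<omega> \<in> space (PiM J M)"
    let ?L = "\<Sum>j\<in>J. \<bar>\<omega> j\<bar>"
    have "?L\<^sup>2 \<le> real (card J) * (\<Sum>j\<in>J. (\<omega> j)\<^sup>2)"
      using sum_squared_le_sum_of_squares[of "\<lambda>j. \<bar>\<omega> j\<bar>" J] by (simp add: mult.commute)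
    moreover have "(1 + ?L)\<^sup>2 \<le> 2 * (1 + ?L\<^sup>2)"
      using sum_power2_ge_zero[of "1 - ?L" 0] by (simp add: power2_eq_square algebra_simps)
    ultimately have "(1 + ?L)\<^sup>2 \<le> 2 * (1 + real (card J) * (\<Sum>j\<in>J. (\<omega> j)\<^sup>2))" by simp
    then have "\<bar>C\<bar> * (1 + ?L)\<^sup>2 \<le> \<bar>C\<bar> * (2 * (1 + real (card J) * (\<Sum>j\<in>J. (\<omega> j)\<^sup>2)))"
      by (rule mult_left_mono) simp
    then have "\<bar>C\<bar> * (1 + ?L)\<^sup>2 \<le> ?g \<omega>"
      by (simp only: mult.assoc mult.left_commute[of 2])
    moreover have "\<bar>f \<omega>\<bar> \<le> \<bar>C\<bar> * (1 + ?L)\<^sup>2"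
      using bound[OF \<omega>] by (rule order_trans) (simp add: mult_right_mono)
    moreover have "0 \<le> ?g \<omega>"
      by (simp add: sum_nonneg)
    ultimately show "norm (f \<omega>) \<le> norm (?g \<omega>)"
      by simp
  qed
  with g f show ?thesis
    by (rule Bochner_Integration.integrable_bound)
qed

definition sample_min :: "'i set \<Rightarrow> ('i \<Rightarrow> real) \<Rightarrow> real" where
  "sample_min J \<omega> = Min (\<omega> ` J)"

definition sample_spread :: "'i set \<Rightarrow> ('i \<Rightarrow> real) \<Rightarrow> real" where
  "sample_spread J \<omega> = (\<Sum>j\<in>J. (\<omega> j - sample_min J \<omega>))"

definition sample_l1 :: "'i set \<Rightarrow> ('i \<Rightarrow> real) \<Rightarrow> real" where
  "sample_l1 J \<omega> = (\<Sum>j\<in>J. \<bar>\<omega> j\<bar>)"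

lemma borel_measurable_sample_min:
  assumes "finite J" "J \<subseteq> I" "\<And>i. i \<in> I \<Longrightarrow> sets (M i) = sets borel"
  shows "sample_min J \<in> borel_measurable (PiM I M)"
  unfolding sample_min_def using assms
  by (intro borel_measurable_Min) (auto intro: measurable_PiM_component_borel)

lemma borel_measurable_sample_spread:
  assumes "finite J" "J \<subseteq> I" "\<And>i. i \<in> I \<Longrightarrow> sets (M i) = sets borel"
  shows "sample_spread J \<in> borel_measurable (PiM I M)"
  unfolding sample_spread_def using assms
  by (intro borel_measurable_sum borel_measurable_diff borel_measurable_sample_min)
     (auto intro: measurable_PiM_component_borel)

lemma sample_min_cong: "(\<And>i. i \<in> J \<Longrightarrow> \<omega> i = \<omega>' i) \<Longrightarrow> sample_min J \<omega> = sample_min J \<omega>'"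
  unfolding sample_min_def by (metis image_cong)

lemma sample_spread_cong: "(\<And>i. i \<in> J \<Longrightarrow> \<omega> i = \<omega>' i) \<Longrightarrow> sample_spread J \<omega> = sample_spread J \<omega>'"
  unfolding sample_spread_def using sample_min_cong[of J \<omega> \<omega>'] by (intro sum.cong) auto

lemma sample_min_le: "finite J \<Longrightarrow> j \<in> J \<Longrightarrow> sample_min J \<omega> \<le> \<omega> j"
  unfolding sample_min_def by (rule Min_le) auto

lemma sample_l1_nonneg: "0 \<le> sample_l1 J \<omega>"
  unfolding sample_l1_def by (simp add: sum_nonneg)

lemma sample_l1_mono: "finite I \<Longrightarrow> J \<subseteq> I \<Longrightarrow> sample_l1 J \<omega> \<le> sample_l1 I \<omega>"
  unfolding sample_l1_def by (intro sum_mono2) auto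

lemma abs_le_sample_l1: "finite J \<Longrightarrow> j \<in> J \<Longrightarrow> \<bar>\<omega> j\<bar> \<le> sample_l1 J \<omega>"
  unfolding sample_l1_def by (rule member_le_sum) auto

lemma abs_sample_min_le:
  assumes "finite J" "J \<noteq> {}"
  shows "\<bar>sample_min J \<omega>\<bar> \<le> sample_l1 J \<omega>"
proof -
  have "Min (\<omega> ` J) \<in> \<omega> ` J"
    using assms by (intro Min_in) auto
  then obtain j where "j \<in> J" "sample_min J \<omega> = \<omega> j"
    by (auto simp: sample_min_def)
  then show ?thesis using abs_le_sample_l1[OF assms(1)] by simp
qed

lemma sample_spread_nonneg: "finite J \<Longrightarrow> 0 \<le> sample_spread J \<omega>"
  unfolding sample_spread_def by (intro sum_nonneg) (auto dest: sample_min_le[of J _ \<omega>])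

lemma abs_sample_spread_le:
  assumes J: "finite J" "J \<noteq> {}"
  shows "\<bar>sample_spread J \<omega>\<bar> \<le> (1 + real (card J)) * sample_l1 J \<omega>"
proof -
  have "sample_spread J \<omega> = (\<Sum>j\<in>J. \<omega> j) - real (card J) * sample_min J \<omega>"
    unfolding sample_spread_def by (simp add: sum_subtractf)
  moreover have "(\<Sum>j\<in>J. \<omega> j) \<le> sample_l1 J \<omega>"
    unfolding sample_l1_def by (intro sum_mono) auto
  moreover have "- (real (card J) * sample_min J \<omega>) \<le> real (card J) * sample_l1 J \<omega>"
    using mult_left_mono[OF abs_le_D2[OF abs_sample_min_le[OF J]], of "real (card J)"] by simp
  ultimately show ?thesis
    using sample_spread_nonneg[OF J(1), of \<omega>] by (simp add: algebra_simps)
qed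

lemma sample_min_insert:
  assumes J: "finite J" "J \<noteq> {}" "j \<notin> J"
  shows "sample_min (insert j J) (x(j := y)) = min y (sample_min J x)"
proof -
  have "(x(j := y)) ` insert j J = insert y (x ` J)"
    using J(3) by (auto simp: image_iff)
  then show ?thesis
    unfolding sample_min_def using J by (simp add: Min_insert)
qed

lemma sample_spread_insert:
  assumes J: "finite J" "J \<noteq> {}" "j \<notin> J"
  shows "sample_spread (insert j J) (x(j := y))
       = (y - min y (sample_min J x)) + (\<Sum>l\<in>J. (x l - min y (sample_min J x)))"
proof -
  have "(\<Sum>l\<in>J. ((x(j := y)) l - min y (sample_min J x))) = (\<Sum>l\<in>J. (x l - min y (sample_min J x)))"
    using J(3) by (intro sum.cong) auto
  then show ?thesis
    unfolding sample_spread_def sample_min_insert[OF J] using J by simp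
qed

lemma Min_image_affine:
  fixes \<omega> :: "'i \<Rightarrow> real"
  assumes sg: "0 < sg" and J: "finite J" "J \<noteq> {}"
  shows "Min (\<omega> ` J) = mu + sg * Min ((\<lambda>j. (\<omega> j - mu) / sg) ` J)"
proof -
  have "mono (\<lambda>y::real. mu + sg * y)" using sg by (auto intro!: monoI)
  then have "mu + sg * Min ((\<lambda>j. (\<omega> j - mu) / sg) ` J) = Min ((\<lambda>y. mu + sg * y) ` (\<lambda>j. (\<omega> j - mu) / sg) ` J)"
    using J by (intro mono_Min_commute) auto
  also have "(\<lambda>y. mu + sg * y) ` (\<lambda>j. (\<omega> j - mu) / sg) ` J = \<omega> ` J"
    using sg by (auto simp: image_image)
  finally show ?thesis ..
qed

lemma prob_space_shexp_sample: "0 < sg \<Longrightarrow> prob_space (shexp_sample J mu sg)"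
  by (intro prob_space_PiM prob_space_shexp_measure)

lemma distr_sample_min:
  assumes sg: "0 < sg" and J: "finite J" "J \<noteq> {}"
  shows "distr (shexp_sample J mu sg) lborel (sample_min J) = shexp_measure mu (sg / card J)"
proof -
  let ?Q = "shexp_sample J mu sg"
  interpret prob_space ?Q by (rule prob_space_shexp_sample[OF sg])
  have standardized: "distributed ?Q lborel (\<lambda>\<omega>. (\<omega> j - mu) / sg) (exponential_density 1)" if j: "j \<in> J" for j
  proof -
    interpret exp1: prob_space exp1_measure by (rule prob_space_exp1_measure)
    have "distr ?Q lborel (\<lambda>\<omega>. (\<omega> j - mu) / sg)
        = distr (distr ?Q (shexp_measure mu sg) (\<lambda>\<omega>. \<omega> j)) lborel (\<lambda>x. (x - mu) / sg)"
      using j by (subst distr_distr) (auto simp: comp_def intro: measurable_component_singleton)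
    also have "\<dots> = distr (distr exp1_measure lborel (\<lambda>t. mu + sg * t)) lborel (\<lambda>x. (x - mu) / sg)"
      using distr_PiM_component[of J "\<lambda>_. shexp_measure mu sg" j] prob_space_shexp_measure[OF sg] j
      by (simp add: shexp_measure_eq_distr[OF sg])
    also have "\<dots> = distr exp1_measure lborel (\<lambda>t. t)"
      using sg by (subst distr_distr) (auto simp: comp_def intro!: distr_cong)
    also have "\<dots> = density lborel (exponential_density 1)"
      by (simp add: distr_id2 exp1_measure_def)
    finally show ?thesis
      using measurable_PiM_component_borel[OF j, of "\<lambda>_. shexp_measure mu sg"]
      by (simp add: distributed_def)
  qed
  have "indep_vars (\<lambda>_. borel) (\<lambda>j \<omega>. (\<omega> j - mu) / sg) J"
    using indep_vars_compose2[OF indep_vars_PiM_components[OF J(2)], of "\<lambda>j x. (x - mu) / sg" "\<lambda>_. borel"]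
      prob_space_shexp_measure[OF sg]
    by simp
  then have "distributed ?Q lborel (\<lambda>\<omega>. Min ((\<lambda>j. (\<omega> j - mu) / sg) ` J)) (exponential_density (card J))"
    using exponential_distributed_Min[OF J _ standardized] by simp
  from distributed_affine_exponential[OF this _ sg, of mu] J
  have "distr ?Q lborel (\<lambda>\<omega>. mu + sg * Min ((\<lambda>j. (\<omega> j - mu) / sg) ` J)) = shexp_measure mu (sg / card J)"
    by (simp add: distributed_def shexp_measure_def card_gt_0_iff)
  moreover have "(\<lambda>\<omega>. mu + sg * Min ((\<lambda>j. (\<omega> j - mu) / sg) ` J)) = sample_min J"
    using Min_image_affine[OF sg J] by (auto simp: sample_min_def)
  ultimately show ?thesis by simp
qed

lemma integral_sample_min:
  assumes sg: "0 < sg" and J: "finite J" "J \<noteq> {}" and [measurable]: "\<phi> \<in> borel_measurable borel"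
  shows "(\<integral>\<omega>. \<phi> (sample_min J \<omega>) \<partial>shexp_sample J mu sg) = exp1_expect (\<lambda>t. \<phi> (mu + sg * (t / card J)))"
proof -
  have "(\<integral>\<omega>. \<phi> (sample_min J \<omega>) \<partial>shexp_sample J mu sg) = integral\<^sup>L (shexp_measure mu (sg / card J)) \<phi>"
    using borel_measurable_sample_min[OF J(1) subset_refl, of "\<lambda>_. shexp_measure mu sg"]
    by (simp add: distr_sample_min[OF sg J, symmetric] integral_distr)
  also have "\<dots> = exp1_expect (\<lambda>t. \<phi> (mu + sg * (t / card J)))"
    using sg J by (simp add: integral_shexp_measure card_gt_0_iff)
  finally show ?thesis .
qed

lemma integrable_sample_min:
  assumes sg: "0 < sg" and J: "finite J" "J \<noteq> {}" and [measurable]: "\<psi> \<in> borel_measurable borel"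
    and bound: "\<And>t. 0 \<le> t \<Longrightarrow> \<bar>\<psi> (mu + sg * (t / card J))\<bar> \<le> A + B * t\<^sup>2"
  shows "integrable (shexp_sample J mu sg) (\<lambda>\<omega>. \<psi> (sample_min J \<omega>))"
proof -
  have "integrable lborel (\<lambda>t. exponential_density 1 t * \<psi> (mu + sg / card J * t))"
    using bound by (intro integrable_exp1_quadratic_bound[of _ A B]) auto
  then have "integrable (distr (shexp_sample J mu sg) lborel (sample_min J)) \<psi>"
    using sg J by (simp add: distr_sample_min integrable_shexp_measure_iff card_gt_0_iff)
  then show ?thesis
    using borel_measurable_sample_min[OF J(1) subset_refl, of "\<lambda>_. shexp_measure mu sg"]
    by (simp add: integrable_distr_eq)
qed

lemma integrable_shexp_sample_bound:
  assumes sg: "0 < sg" and J: "finite J"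
    and f: "f \<in> borel_measurable (shexp_sample J mu sg)"
    and bound: "\<And>\<omega>. \<bar>f \<omega>\<bar> \<le> C * (1 + sample_l1 J \<omega>)\<^sup>2"
  shows "integrable (shexp_sample J mu sg) f"
  by (rule integrable_PiM_quadratic_bound[OF J prob_space_shexp_measure[OF sg] integrable_shexp_measure_square[OF sg] f])
     (use bound in \<open>auto simp: sample_l1_def\<close>)

lemma integral_shexp_sample_insert:
  fixes f :: "('i \<Rightarrow> real) \<Rightarrow> real"
  assumes sg: "0 < sg" and J: "finite J" "j \<notin> J"
    and f: "integrable (shexp_sample (insert j J) mu sg) f"
  shows "integral\<^sup>L (shexp_sample (insert j J) mu sg) f
       = (\<integral>x. (\<integral>y. f (x(j := y)) \<partial>shexp_measure mu sg) \<partial>shexp_sample J mu sg)"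
proof -
  have "product_sigma_finite (\<lambda>_. shexp_measure mu sg)"
    unfolding product_sigma_finite_def using prob_space_shexp_measure[OF sg] prob_space_imp_sigma_finite by blast
  from product_sigma_finite.product_integral_insert[OF this J f] show ?thesis .
qed

lemma abs_mult_le_quadratic:
  fixes u v L a A B :: real
  assumes L: "0 \<le> L" and u: "\<bar>u\<bar> \<le> a * L" and v: "\<bar>v\<bar> \<le> A + B * L"
    and a: "0 \<le> a" and A: "0 \<le> A" and B: "0 \<le> B"
  shows "\<bar>u * v\<bar> \<le> a * (A + B) * (1 + L)\<^sup>2"
proof -
  have "\<bar>u * v\<bar> \<le> (a * L) * (A + B * L)"
    unfolding abs_mult by (rule mult_mono[OF u v]) (use a L in auto)
  also have "\<dots> = a * (A * L + B * L\<^sup>2)" by (simp add: power2_eq_square algebra_simps)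
  also have "\<dots> \<le> a * (A * (1 + L)\<^sup>2 + B * (1 + L)\<^sup>2)"
    using L A B a by (intro mult_left_mono add_mono) (auto simp: power2_eq_square algebra_simps)
  finally show ?thesis by (simp add: algebra_simps)
qed

lemma card_ge_2_remove:
  assumes J: "finite J" and k: "2 \<le> card J" and j: "j \<in> J"
  shows "finite (J - {j})" "J - {j} \<noteq> {}" "j \<notin> J - {j}" "insert j (J - {j}) = J"
    "real (card (J - {j})) = real (card J) - 1"
proof -
  have c: "card (J - {j}) = card J - 1" using J j by (simp add: card_Diff_singleton)
  show "finite (J - {j})" "j \<notin> J - {j}" "insert j (J - {j}) = J" using J j by auto
  show "real (card (J - {j})) = real (card J) - 1" using c k by simp
  show "J - {j} \<noteq> {}"
  proof
    assume "J - {j} = {}"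
    with c k show False by simp
  qed
qed

lemma pos_part_mean_above: "0 < sg \<Longrightarrow> 0 \<le> u \<Longrightarrow> pos_part_mean mu sg (mu + sg * u) = sg * exp (- u)"
  by (simp add: pos_part_mean_def)

lemma pos_part_sq_mean_above: "0 < sg \<Longrightarrow> 0 \<le> u \<Longrightarrow> pos_part_sq_mean mu sg (mu + sg * u) = 2 * sg\<^sup>2 * exp (- u)"
  by (simp add: pos_part_sq_mean_def)

lemma abs_pos_part_mean_le: "0 < sg \<Longrightarrow> \<bar>pos_part_mean mu sg x\<bar> \<le> (\<bar>mu\<bar> + sg) + 1 * \<bar>x\<bar>"
proof (cases "mu \<le> x")
  case True
  assume sg: "0 < sg"
  have "sg * exp (- ((x - mu) / sg)) \<le> sg"
    using True sg by (simp add: mult_le_cancel_left1)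
  then have "\<bar>pos_part_mean mu sg x\<bar> \<le> sg"
    using True sg by (simp add: pos_part_mean_def)
  then show ?thesis
    using abs_ge_zero[of mu] abs_ge_zero[of x] by linarith
qed (simp add: pos_part_mean_def)

lemma abs_pos_part_le: "\<bar>max (y - m) 0\<bar> \<le> (1 + \<bar>m\<bar>) + 1 * (y::real)\<^sup>2"
proof -
  have "\<bar>y\<bar> \<le> 1 + y\<^sup>2"
    using sum_power2_ge_zero[of "\<bar>y\<bar> - 1" 0] by (simp add: power2_eq_square algebra_simps)
  then show ?thesis by (auto simp: max_def)
qed

lemma abs_pos_part_sq_le: "\<bar>(max (y - m) 0)\<^sup>2\<bar> \<le> 2 * m\<^sup>2 + 2 * (y::real)\<^sup>2"
proof -
  have "(max (y - m) 0)\<^sup>2 \<le> (y - m)\<^sup>2"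
    by (cases "y \<le> m") (auto simp: max_def)
  moreover have "(y - m)\<^sup>2 \<le> 2 * m\<^sup>2 + 2 * y\<^sup>2"
    using sum_power2_ge_zero[of "y + m" 0] by (simp add: power2_eq_square algebra_simps)
  ultimately show ?thesis by simp
qed

lemma abs_excess_le:
  "finite J \<Longrightarrow> J \<noteq> {} \<Longrightarrow> j \<in> J \<Longrightarrow> \<bar>\<omega> j - sample_min J \<omega>\<bar> \<le> 2 * sample_l1 J \<omega>"
proof -
  assume J: "finite J" "J \<noteq> {}" and j: "j \<in> J"
  have "\<bar>\<omega> j\<bar> \<le> sample_l1 J \<omega>" "\<bar>sample_min J \<omega>\<bar> \<le> sample_l1 J \<omega>"
    using abs_le_sample_l1[OF J(1) j] abs_sample_min_le[OF J] by auto
  then show ?thesis by linarith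
qed

lemma integrable_excess_mult:
  assumes sg: "0 < sg" and J: "finite J" "J \<noteq> {}" and j: "j \<in> J"
    and [measurable]: "h \<in> borel_measurable (shexp_sample J mu sg)"
    and bound: "\<And>\<omega>. \<bar>h \<omega>\<bar> \<le> A + B * sample_l1 J \<omega>" and A: "0 \<le> A" and B: "0 \<le> B"
  shows "integrable (shexp_sample J mu sg) (\<lambda>\<omega>. (\<omega> j - sample_min J \<omega>) * h \<omega>)"
proof (rule integrable_shexp_sample_bound[OF sg J(1)])
  have [measurable]: "(\<lambda>\<omega>. \<omega> j) \<in> borel_measurable (shexp_sample J mu sg)"
    by (rule measurable_PiM_component_borel[OF j]) simp
  have [measurable]: "sample_min J \<in> borel_measurable (shexp_sample J mu sg)"
    by (rule borel_measurable_sample_min[OF J(1) subset_refl]) simp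
  show "(\<lambda>\<omega>. (\<omega> j - sample_min J \<omega>) * h \<omega>) \<in> borel_measurable (shexp_sample J mu sg)"
    by measurable
  show "\<bar>(\<omega> j - sample_min J \<omega>) * h \<omega>\<bar> \<le> 2 * (A + B) * (1 + sample_l1 J \<omega>)\<^sup>2" for \<omega>
    by (rule abs_mult_le_quadratic[OF sample_l1_nonneg abs_excess_le[OF J j] bound]) (use A B in auto)
qed

lemma integrable_spread_mult:
  assumes sg: "0 < sg" and J: "finite J" "J \<noteq> {}"
    and [measurable]: "h \<in> borel_measurable (shexp_sample J mu sg)"
    and bound: "\<And>\<omega>. \<bar>h \<omega>\<bar> \<le> A + B * sample_l1 J \<omega>" and A: "0 \<le> A" and B: "0 \<le> B"
  shows "integrable (shexp_sample J mu sg) (\<lambda>\<omega>. sample_spread J \<omega> * h \<omega>)"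
proof (rule integrable_shexp_sample_bound[OF sg J(1)])
  have [measurable]: "sample_spread J \<in> borel_measurable (shexp_sample J mu sg)"
    by (rule borel_measurable_sample_spread[OF J(1) subset_refl]) simp
  show "(\<lambda>\<omega>. sample_spread J \<omega> * h \<omega>) \<in> borel_measurable (shexp_sample J mu sg)"
    by measurable
  show "\<bar>sample_spread J \<omega> * h \<omega>\<bar> \<le> (1 + real (card J)) * (A + B) * (1 + sample_l1 J \<omega>)\<^sup>2" for \<omega>
    by (rule abs_mult_le_quadratic[OF sample_l1_nonneg abs_sample_spread_le[OF J] bound]) (use A B in auto)
qed

lemma sample_spread_singleton: "sample_spread {j} \<omega> = 0"
  by (simp add: sample_spread_def sample_min_def)

text \<open>Integrating out the coordinate \<open>j\<close> first: given the other coordinates, with minimum \<open>m\<close>,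
  the excess \<open>\<omega> j - sample_min J \<omega>\<close> is the positive part \<open>max (\<omega> j - m) 0\<close>.\<close>
lemma integral_excess_mult_min:
  fixes \<phi> :: "real \<Rightarrow> real"
  assumes sg: "0 < sg" and J: "finite J" and k: "2 \<le> card J" and j: "j \<in> J"
    and [measurable]: "\<phi> \<in> borel_measurable borel"
    and int: "integrable (shexp_sample J mu sg) (\<lambda>\<omega>. (\<omega> j - sample_min J \<omega>) * \<phi> (sample_min J \<omega>))"
  shows "integral\<^sup>L (shexp_sample J mu sg) (\<lambda>\<omega>. (\<omega> j - sample_min J \<omega>) * \<phi> (sample_min J \<omega>))
       = sg * ((real (card J) - 1) / card J) * exp1_expect (\<lambda>s. \<phi> (mu + sg * (s / card J)))"
proof -
  let ?J' = "J - {j}"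
  let ?r = "real (card J)"
  note S = card_ge_2_remove[OF J k j]
  have r: "1 < ?r" using k by simp
  let ?f = "\<lambda>\<omega>. (\<omega> j - sample_min J \<omega>) * \<phi> (sample_min J \<omega>)"
  have "integral\<^sup>L (shexp_sample J mu sg) ?f = (\<integral>x. (\<integral>y. ?f (x(j := y)) \<partial>shexp_measure mu sg) \<partial>shexp_sample ?J' mu sg)"
    using integral_shexp_sample_insert[OF sg S(1,3), of mu ?f] int S(4) by simp
  also have "\<dots> = (\<integral>x. pos_part_mean mu sg (sample_min ?J' x) * \<phi> (sample_min ?J' x) \<partial>shexp_sample ?J' mu sg)"
  proof (intro Bochner_Integration.integral_cong refl)
    fix x :: "'a \<Rightarrow> real"
    have "?f (x(j := y)) = max (y - sample_min ?J' x) 0 * \<phi> (sample_min ?J' x)" for y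
      using sample_min_insert[OF S(1,2,3), of x y] S(4) by (auto simp: max_def min_def)
    then show "(\<integral>y. ?f (x(j := y)) \<partial>shexp_measure mu sg) = pos_part_mean mu sg (sample_min ?J' x) * \<phi> (sample_min ?J' x)"
      using integral_shexp_pos_part[OF sg, of mu "sample_min ?J' x"] by simp
  qed
  also have "\<dots> = exp1_expect (\<lambda>t. pos_part_mean mu sg (mu + sg * (t / (?r - 1))) * \<phi> (mu + sg * (t / (?r - 1))))"
    using integral_sample_min[OF sg S(1,2), of "\<lambda>m. pos_part_mean mu sg m * \<phi> m" mu] S(5) by simp
  also have "\<dots> = exp1_expect (\<lambda>t. sg * (\<phi> (mu + sg * (t / (?r - 1))) * exp (- (t / (?r - 1)))))"
    using sg r by (intro exp1_expect_cong) (simp add: pos_part_mean_above del: times_divide_eq_right)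
  also have "\<dots> = sg * ((?r - 1) / ?r * exp1_expect (\<lambda>s. \<phi> (mu + sg * (s / ?r))))"
    unfolding exp1_expect_cmult exp1_expect_exp_scale[OF r, of "\<lambda>u. \<phi> (mu + sg * u)"] ..
  finally show ?thesis by simp
qed

lemma integral_spread_mult_min:
  fixes \<phi> :: "real \<Rightarrow> real"
  assumes sg: "0 < sg" and J: "finite J" "J \<noteq> {}" and [measurable]: "\<phi> \<in> borel_measurable borel"
    and \<phi>_bound: "\<And>x. \<bar>\<phi> x\<bar> \<le> A + B * \<bar>x\<bar>" and A: "0 \<le> A" and B: "0 \<le> B"
  shows "integrable (shexp_sample J mu sg) (\<lambda>\<omega>. sample_spread J \<omega> * \<phi> (sample_min J \<omega>))" (is ?I)
    and "integral\<^sup>L (shexp_sample J mu sg) (\<lambda>\<omega>. sample_spread J \<omega> * \<phi> (sample_min J \<omega>))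
       = (real (card J) - 1) * sg * integral\<^sup>L (shexp_sample J mu sg) (\<lambda>\<omega>. \<phi> (sample_min J \<omega>))" (is ?E)
proof -
  let ?Q = "shexp_sample J mu sg"
  let ?r = "real (card J)"
  have [measurable]: "sample_min J \<in> borel_measurable ?Q"
    by (rule borel_measurable_sample_min[OF J(1) subset_refl]) simp
  have bound: "\<bar>\<phi> (sample_min J \<omega>)\<bar> \<le> A + B * sample_l1 J \<omega>" for \<omega>
    using \<phi>_bound[of "sample_min J \<omega>"] abs_sample_min_le[OF J, of \<omega>] B
    by (meson add_left_mono mult_left_mono order_trans)
  show ?I
  proof (rule integrable_spread_mult[OF sg J])
    show "(\<lambda>\<omega>. \<phi> (sample_min J \<omega>)) \<in> borel_measurable ?Q" by measurable
  qed (fact bound A B)+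
  show ?E
  proof (cases "card J = 1")
    case True
    then obtain j where "J = {j}" by (auto simp: card_Suc_eq)
    then show ?thesis by (simp add: sample_spread_singleton)
  next
    case False
    moreover have "0 < card J" using J by (simp add: card_gt_0_iff)
    ultimately have k: "2 \<le> card J" by simp
    have int: "integrable ?Q (\<lambda>\<omega>. (\<omega> j - sample_min J \<omega>) * \<phi> (sample_min J \<omega>))" if "j \<in> J" for j
    proof (rule integrable_excess_mult[OF sg J that])
      show "(\<lambda>\<omega>. \<phi> (sample_min J \<omega>)) \<in> borel_measurable ?Q" by measurable
    qed (fact bound A B)+
    have "integral\<^sup>L ?Q (\<lambda>\<omega>. sample_spread J \<omega> * \<phi> (sample_min J \<omega>))
        = (\<Sum>j\<in>J. integral\<^sup>L ?Q (\<lambda>\<omega>. (\<omega> j - sample_min J \<omega>) * \<phi> (sample_min J \<omega>)))"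
      unfolding sample_spread_def sum_distrib_right using int by (rule Bochner_Integration.integral_sum)
    also have "\<dots> = (\<Sum>j\<in>J. sg * ((?r - 1) / ?r) * exp1_expect (\<lambda>s. \<phi> (mu + sg * (s / ?r))))"
      by (intro sum.cong refl integral_excess_mult_min[OF sg J(1) k] int) auto
    also have "\<dots> = (?r - 1) * sg * exp1_expect (\<lambda>s. \<phi> (mu + sg * (s / ?r)))"
      using k by simp
    finally show ?thesis
      using integral_sample_min[OF sg J, of \<phi> mu] by simp
  qed
qed

lemma integral_excess_mult_spread_insert:
  assumes sg: "0 < sg" and J: "finite J" "J \<noteq> {}" "j \<notin> J"
  shows "(\<integral>y. (y - sample_min (insert j J) (x(j := y))) * sample_spread (insert j J) (x(j := y)) \<partial>shexp_measure mu sg)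
       = pos_part_sq_mean mu sg (sample_min J x) + sample_spread J x * pos_part_mean mu sg (sample_min J x)"
proof -
  let ?m = "sample_min J x"
  have "(y - sample_min (insert j J) (x(j := y))) * sample_spread (insert j J) (x(j := y))
      = (max (y - ?m) 0)\<^sup>2 + max (y - ?m) 0 * sample_spread J x" for y
  proof (cases "y \<le> ?m")
    case True
    then show ?thesis by (simp add: sample_min_insert[OF J] max_def min_def)
  next
    case False
    have "sample_spread (insert j J) (x(j := y)) = (y - min y ?m) + (\<Sum>l\<in>J. (x l - min y ?m))"
      by (rule sample_spread_insert[OF J])
    also have "\<dots> = (y - ?m) + sample_spread J x"
      using False by (simp add: sample_spread_def min_def)
    finally have spread: "sample_spread (insert j J) (x(j := y)) = (y - ?m) + sample_spread J x" .
    show ?thesis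
      unfolding spread sample_min_insert[OF J] using False
      by (simp add: max_def min_def power2_eq_square algebra_simps)
  qed
  moreover have "integrable (shexp_measure mu sg) (\<lambda>y. (max (y - ?m) 0)\<^sup>2)"
    by (rule integrable_shexp_measure_quadratic_bound[OF sg _ abs_pos_part_sq_le]) auto
  moreover have "integrable (shexp_measure mu sg) (\<lambda>y. max (y - ?m) 0)"
    by (rule integrable_shexp_measure_quadratic_bound[OF sg _ abs_pos_part_le]) auto
  ultimately show ?thesis
    using integral_shexp_pos_part[OF sg, of mu ?m] integral_shexp_pos_part_sq[OF sg, of mu ?m] by simp
qed

lemma pos_part_means_sample_min:
  assumes sg: "0 < sg" and J: "finite J" "J \<noteq> {}"
  shows "(\<integral>x. pos_part_mean mu sg (sample_min J x) \<partial>shexp_sample J mu sg) = sg * (real (card J) / (real (card J) + 1))"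
    and "(\<integral>x. pos_part_sq_mean mu sg (sample_min J x) \<partial>shexp_sample J mu sg) = 2 * sg\<^sup>2 * (real (card J) / (real (card J) + 1))"
    and "integrable (shexp_sample J mu sg) (\<lambda>x. pos_part_sq_mean mu sg (sample_min J x))"
proof -
  let ?k = "real (card J)"
  have k: "1 < ?k + 1" using J by (simp add: card_gt_0_iff)
  have exp_div: "exp1_expect (\<lambda>t. exp (- (t / ?k))) = ?k / (?k + 1)"
    using exp1_expect_exp_div[OF k] by simp
  have "(\<integral>x. pos_part_mean mu sg (sample_min J x) \<partial>shexp_sample J mu sg)
      = exp1_expect (\<lambda>t. pos_part_mean mu sg (mu + sg * (t / ?k)))"
    using integral_sample_min[OF sg J, of "pos_part_mean mu sg" mu] by simp
  also have "\<dots> = exp1_expect (\<lambda>t. sg * exp (- (t / ?k)))"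
    using sg by (intro exp1_expect_cong) (simp add: pos_part_mean_above del: times_divide_eq_right)
  finally show "(\<integral>x. pos_part_mean mu sg (sample_min J x) \<partial>shexp_sample J mu sg) = sg * (?k / (?k + 1))"
    by (simp only: exp1_expect_cmult exp_div)
  have "(\<integral>x. pos_part_sq_mean mu sg (sample_min J x) \<partial>shexp_sample J mu sg)
      = exp1_expect (\<lambda>t. pos_part_sq_mean mu sg (mu + sg * (t / ?k)))"
    using integral_sample_min[OF sg J, of "pos_part_sq_mean mu sg" mu] by simp
  also have "\<dots> = exp1_expect (\<lambda>t. 2 * sg\<^sup>2 * exp (- (t / ?k)))"
    using sg by (intro exp1_expect_cong) (simp add: pos_part_sq_mean_above del: times_divide_eq_right)
  finally show "(\<integral>x. pos_part_sq_mean mu sg (sample_min J x) \<partial>shexp_sample J mu sg) = 2 * sg\<^sup>2 * (?k / (?k + 1))"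
    by (simp only: exp1_expect_cmult exp_div)
  show "integrable (shexp_sample J mu sg) (\<lambda>x. pos_part_sq_mean mu sg (sample_min J x))"
  proof (rule integrable_sample_min[OF sg J, where A="2 * sg\<^sup>2" and B=0])
    fix t :: real
    assume "0 \<le> t"
    then have "pos_part_sq_mean mu sg (mu + sg * (t / ?k)) = 2 * sg\<^sup>2 * exp (- (t / ?k))"
      using sg by (simp add: pos_part_sq_mean_above del: times_divide_eq_right)
    moreover have "exp (- (t / ?k)) \<le> 1"
      using \<open>0 \<le> t\<close> by simp
    ultimately show "\<bar>pos_part_sq_mean mu sg (mu + sg * (t / ?k))\<bar> \<le> 2 * sg\<^sup>2 + 0 * t\<^sup>2"
      by (simp add: mult_left_le)
  qed simp
qed

lemma integral_excess_mult_spread: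
  assumes sg: "0 < sg" and J: "finite J" and k: "2 \<le> card J" and j: "j \<in> J"
    and int: "integrable (shexp_sample J mu sg) (\<lambda>\<omega>. (\<omega> j - sample_min J \<omega>) * sample_spread J \<omega>)"
  shows "integral\<^sup>L (shexp_sample J mu sg) (\<lambda>\<omega>. (\<omega> j - sample_min J \<omega>) * sample_spread J \<omega>)
       = sg\<^sup>2 * (real (card J) - 1)"
proof -
  let ?J' = "J - {j}" and ?r = "real (card J)"
  let ?Q' = "shexp_sample ?J' mu sg"
  let ?f = "\<lambda>\<omega>. (\<omega> j - sample_min (insert j ?J') \<omega>) * sample_spread (insert j ?J') \<omega>"
  note S = card_ge_2_remove[OF J k j]
  note P = pos_part_means_sample_min[OF sg S(1,2), of mu]
  have [measurable]: "sample_min ?J' \<in> borel_measurable ?Q'"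
    by (rule borel_measurable_sample_min[OF S(1) subset_refl]) simp
  have SP: "integrable ?Q' (\<lambda>x. sample_spread ?J' x * pos_part_mean mu sg (sample_min ?J' x))"
    "(\<integral>x. sample_spread ?J' x * pos_part_mean mu sg (sample_min ?J' x) \<partial>?Q')
       = (?r - 2) * sg * (\<integral>x. pos_part_mean mu sg (sample_min ?J' x) \<partial>?Q')"
    using integral_spread_mult_min[OF sg S(1,2) _ abs_pos_part_mean_le[OF sg], of mu] S(5) sg by auto
  have "integral\<^sup>L (shexp_sample J mu sg) (\<lambda>\<omega>. (\<omega> j - sample_min J \<omega>) * sample_spread J \<omega>)
      = integral\<^sup>L (shexp_sample (insert j ?J') mu sg) ?f"
    using S(4) by simp
  also have "\<dots> = (\<integral>x. (\<integral>y. ?f (x(j := y)) \<partial>shexp_measure mu sg) \<partial>?Q')"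
    by (rule integral_shexp_sample_insert[OF sg S(1,3)]) (use int S(4) in simp)
  also have "\<dots> = (\<integral>x. pos_part_sq_mean mu sg (sample_min ?J' x)
              + sample_spread ?J' x * pos_part_mean mu sg (sample_min ?J' x) \<partial>?Q')"
    by (simp add: integral_excess_mult_spread_insert[OF sg S(1-3)] del: insert_Diff_single)
  also have "\<dots> = 2 * sg\<^sup>2 * ((?r - 1) / ?r) + (?r - 2) * sg * (sg * ((?r - 1) / ?r))"
    using P SP S(5) by simp
  also have "\<dots> = sg\<^sup>2 * (?r - 1)"
    using k by (simp add: field_simps power2_eq_square)
  finally show ?thesis by simp
qed

lemma integral_spread_sq:
  assumes sg: "0 < sg" and J: "finite J" "J \<noteq> {}"
  shows "integrable (shexp_sample J mu sg) (\<lambda>\<omega>. (sample_spread J \<omega>)\<^sup>2)" (is ?I)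
    and "integral\<^sup>L (shexp_sample J mu sg) (\<lambda>\<omega>. (sample_spread J \<omega>)\<^sup>2) = card J * (real (card J) - 1) * sg\<^sup>2" (is ?E)
proof -
  let ?Q = "shexp_sample J mu sg"
  let ?r = "real (card J)"
  have [measurable]: "sample_spread J \<in> borel_measurable ?Q"
    by (rule borel_measurable_sample_spread[OF J(1) subset_refl]) simp
  have bound: "\<bar>sample_spread J \<omega>\<bar> \<le> 0 + (1 + ?r) * sample_l1 J \<omega>" for \<omega>
    using abs_sample_spread_le[OF J, of \<omega>] by simp
  have "integrable ?Q (\<lambda>\<omega>. sample_spread J \<omega> * sample_spread J \<omega>)"
    by (rule integrable_spread_mult[where A=0 and B="1 + ?r", OF sg J]) (use bound in auto)
  then show ?I by (simp add: power2_eq_square)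
  show ?E
  proof (cases "card J = 1")
    case True
    then obtain j where "J = {j}" by (auto simp: card_Suc_eq)
    then show ?thesis by (simp add: sample_spread_singleton)
  next
    case False
    moreover have "0 < card J" using J by (simp add: card_gt_0_iff)
    ultimately have k: "2 \<le> card J" by simp
    have int: "integrable ?Q (\<lambda>\<omega>. (\<omega> j - sample_min J \<omega>) * sample_spread J \<omega>)" if "j \<in> J" for j
      by (rule integrable_excess_mult[where A=0 and B="1 + ?r", OF sg J that]) (use bound in auto)
    have "integral\<^sup>L ?Q (\<lambda>\<omega>. (sample_spread J \<omega>)\<^sup>2)
        = integral\<^sup>L ?Q (\<lambda>\<omega>. \<Sum>j\<in>J. (\<omega> j - sample_min J \<omega>) * sample_spread J \<omega>)"
      by (simp add: power2_eq_square sum_distrib_right[symmetric] sample_spread_def[of J])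
    also have "\<dots> = (\<Sum>j\<in>J. integral\<^sup>L ?Q (\<lambda>\<omega>. (\<omega> j - sample_min J \<omega>) * sample_spread J \<omega>))"
      using int by (rule Bochner_Integration.integral_sum)
    also have "\<dots> = (\<Sum>j\<in>J. sg\<^sup>2 * (?r - 1))"
      by (intro sum.cong refl integral_excess_mult_spread[OF sg J(1) k] int) auto
    finally show ?thesis by (simp add: algebra_simps)
  qed
qed

lemma abs_affine_le:
  fixes f k l A B x :: real
  assumes "\<bar>f\<bar> \<le> A + B * x"
  shows "\<bar>k * f + l\<bar> \<le> (\<bar>k\<bar> * A + \<bar>l\<bar>) + (\<bar>k\<bar> * B) * x"
proof -
  have "\<bar>k * f + l\<bar> \<le> \<bar>k\<bar> * \<bar>f\<bar> + \<bar>l\<bar>"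
    using abs_triangle_ineq[of "k * f" l] by (simp add: abs_mult)
  also have "\<dots> \<le> \<bar>k\<bar> * (A + B * x) + \<bar>l\<bar>"
    using assms by (simp add: mult_left_mono)
  finally show ?thesis by (simp add: algebra_simps)
qed

lemma linear_le_quadratic:
  fixes t :: real
  assumes "0 \<le> t" "0 \<le> B" "0 \<le> C"
  shows "A + B * t + C * t\<^sup>2 \<le> (A + B) + (B + C) * t\<^sup>2"
proof -
  have "t \<le> 1 + t\<^sup>2"
    using sum_power2_ge_zero[of "t - 1" 0] assms(1) by (simp add: power2_eq_square algebra_simps)
  then have "B * t \<le> B * (1 + t\<^sup>2)" using assms(2) by (rule mult_left_mono)
  then show ?thesis by (simp add: algebra_simps)
qed

lemma abs_cond_moment1_le: "\<bar>cond_moment1 \<delta> s\<bar> \<le> (2 + \<bar>\<delta>\<bar>) + \<bar>s\<bar>"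
proof (cases "s - \<delta> \<le> 0")
  case False
  have "\<bar>exp (- (s - \<delta>)) * (\<delta> - 1)\<bar> \<le> \<bar>\<delta> - 1\<bar>"
    using False by (simp add: abs_mult mult_left_le_one_le)
  then show ?thesis
    using False unfolding cond_moment1_def by (smt (verit))
qed (simp add: cond_moment1_def)

lemma abs_cond_moment2_le:
  assumes s: "0 \<le> s"
  shows "\<bar>cond_moment2 \<delta> s\<bar> \<le> (4 + \<delta>\<^sup>2 + 2 * \<bar>\<delta>\<bar>) + (2 + 2 * \<bar>\<delta>\<bar>) * s + s\<^sup>2"
proof (cases "s - \<delta> \<le> 0")
  case False
  let ?X = "s\<^sup>2 - (s - \<delta>)\<^sup>2 - 2 * (s - \<delta>) - 2"
  have "?X = 2 * (s * \<delta>) - \<delta>\<^sup>2 - 2 * s + 2 * \<delta> - 2"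
    by (simp add: power2_eq_square algebra_simps)
  moreover have "\<bar>s * \<delta>\<bar> = s * \<bar>\<delta>\<bar>" using s by (simp add: abs_mult)
  ultimately have "\<bar>?X\<bar> \<le> 2 * (s * \<bar>\<delta>\<bar>) + \<delta>\<^sup>2 + 2 * s + 2 * \<bar>\<delta>\<bar> + 2"
    using s zero_le_power2[of \<delta>] by (smt (verit))
  moreover have "\<bar>exp (- (s - \<delta>)) * ?X\<bar> \<le> \<bar>?X\<bar>"
    using False by (simp add: abs_mult mult_left_le_one_le)
  moreover have "cond_moment2 \<delta> s = 2 + exp (- (s - \<delta>)) * ?X"
    using False by (simp add: cond_moment2_def)
  moreover have "(2 + 2 * \<bar>\<delta>\<bar>) * s = 2 * s + 2 * (s * \<bar>\<delta>\<bar>)"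
    by (simp add: algebra_simps)
  ultimately show ?thesis
    using zero_le_power2[of s] by (smt (verit))
qed (use s in \<open>simp add: cond_moment2_def\<close>)

lemma abs_affine_cond_moment1_le:
  assumes sg: "0 < sg" and k: "0 \<le> k"
  shows "\<bar>q * cond_moment1 \<delta> (k * (a - mu) / sg) + r\<bar>
       \<le> (\<bar>q\<bar> * (2 + \<bar>\<delta>\<bar> + k / sg * \<bar>mu\<bar>) + \<bar>r\<bar>) + (\<bar>q\<bar> * (k / sg)) * \<bar>a\<bar>"
proof (rule abs_affine_le)
  have "k * (a - mu) / sg = k / sg * a + (- (k / sg * mu))"
    using sg by (simp add: field_simps)
  then have "\<bar>k * (a - mu) / sg\<bar> \<le> k / sg * \<bar>mu\<bar> + k / sg * \<bar>a\<bar>"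
    using sg k abs_triangle_ineq[of "k / sg * a" "- (k / sg * mu)"] by (simp add: abs_mult)
  then show "\<bar>cond_moment1 \<delta> (k * (a - mu) / sg)\<bar> \<le> (2 + \<bar>\<delta>\<bar> + k / sg * \<bar>mu\<bar>) + k / sg * \<bar>a\<bar>"
    using abs_cond_moment1_le[of \<delta> "k * (a - mu) / sg"] by linarith
qed

lemma borel_measurable_cond_moment1[measurable]: "cond_moment1 \<delta> \<in> borel_measurable borel"
  unfolding cond_moment1_def by measurable

lemma borel_measurable_cond_moment2[measurable]: "cond_moment2 \<delta> \<in> borel_measurable borel"
  unfolding cond_moment2_def by measurable

lemma integrable_sample_min_cond_moments:
  assumes sg: "0 < sg" and J: "finite J" "J \<noteq> {}"
  shows "integrable (shexp_sample J mu sg) (\<lambda>x. cond_moment1 \<delta> (card J * (sample_min J x - mu) / sg))"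
    and "integrable (shexp_sample J mu sg) (\<lambda>x. cond_moment2 \<delta> (card J * (sample_min J x - mu) / sg))"
proof -
  have standard: "card J * (mu + sg * (t / card J) - mu) / sg = t" for t
    using sg J by (simp add: card_gt_0_iff)
  show "integrable (shexp_sample J mu sg) (\<lambda>x. cond_moment1 \<delta> (card J * (sample_min J x - mu) / sg))"
  proof (rule integrable_sample_min[OF sg J, where A="2 + \<bar>\<delta>\<bar> + 1" and B=1])
    fix t :: real
    assume "0 \<le> t"
    then show "\<bar>cond_moment1 \<delta> (card J * (mu + sg * (t / card J) - mu) / sg)\<bar> \<le> 2 + \<bar>\<delta>\<bar> + 1 + 1 * t\<^sup>2"
      unfolding standard using abs_cond_moment1_le[of \<delta> t] linear_le_quadratic[of t 1 0 "2 + \<bar>\<delta>\<bar>"] by simp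
  qed measurable
  show "integrable (shexp_sample J mu sg) (\<lambda>x. cond_moment2 \<delta> (card J * (sample_min J x - mu) / sg))"
  proof (rule integrable_sample_min[OF sg J, where A="(4 + \<delta>\<^sup>2 + 2 * \<bar>\<delta>\<bar>) + (2 + 2 * \<bar>\<delta>\<bar>)"
        and B="(2 + 2 * \<bar>\<delta>\<bar>) + 1"])
    fix t :: real
    assume "0 \<le> t"
    then show "\<bar>cond_moment2 \<delta> (card J * (mu + sg * (t / card J) - mu) / sg)\<bar>
        \<le> (4 + \<delta>\<^sup>2 + 2 * \<bar>\<delta>\<bar>) + (2 + 2 * \<bar>\<delta>\<bar>) + ((2 + 2 * \<bar>\<delta>\<bar>) + 1) * t\<^sup>2"
      unfolding standard using abs_cond_moment2_le[of t \<delta>] linear_le_quadratic[of t "2 + 2 * \<bar>\<delta>\<bar>" 1] by simp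
  qed measurable
qed

lemma integral_cond_moments_sample_min:
  assumes sg: "0 < sg" and J: "finite J" "J \<noteq> {}"
  shows "(\<integral>x. p * cond_moment2 \<delta> (card J * (sample_min J x - mu) / sg)
            + q * cond_moment1 \<delta> (card J * (sample_min J x - mu) / sg) + r \<partial>shexp_sample J mu sg)
       = p * moment2 \<bar>\<delta>\<bar> + q * moment1 \<bar>\<delta>\<bar> + r"
proof -
  let ?f = "\<lambda>a. p * cond_moment2 \<delta> (card J * (a - mu) / sg) + q * cond_moment1 \<delta> (card J * (a - mu) / sg) + r"
  have standard: "card J * (mu + sg * (t / card J) - mu) / sg = t" for t
    using sg J by (simp add: card_gt_0_iff)
  have meas: "?f \<in> borel_measurable borel" by measurable
  have "(\<integral>x. ?f (sample_min J x) \<partial>shexp_sample J mu sg) = exp1_expect (\<lambda>t. ?f (mu + sg * (t / card J)))"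
    by (rule integral_sample_min[OF sg J meas])
  also have "\<dots> = exp1_expect (\<lambda>t. p * cond_moment2 \<delta> t + q * cond_moment1 \<delta> t + r)"
    unfolding standard ..
  also have "\<dots> = p * moment2 \<bar>\<delta>\<bar> + q * moment1 \<bar>\<delta>\<bar> + r"
    by (intro has_exp1_expectD has_exp1_expect_add has_exp1_expect_cmult has_exp1_expect_cond_moment1
        has_exp1_expect_cond_moment2 has_exp1_expect_const)
  finally show ?thesis .
qed

lemma integrable_sample_min_square_linear:
  assumes sg: "0 < sg" and J: "finite J" "J \<noteq> {}" and [measurable]: "\<phi> \<in> borel_measurable borel"
    and bound: "\<And>x. \<bar>\<phi> x\<bar> \<le> K + \<bar>x\<bar>" and K: "0 \<le> K"
  shows "integrable (shexp_sample J mu sg) (\<lambda>\<omega>. (\<phi> (sample_min J \<omega>))\<^sup>2)"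
proof (rule integrable_shexp_sample_bound[OF sg J(1)])
  have [measurable]: "sample_min J \<in> borel_measurable (shexp_sample J mu sg)"
    by (rule borel_measurable_sample_min[OF J(1) subset_refl]) simp
  show "(\<lambda>\<omega>. (\<phi> (sample_min J \<omega>))\<^sup>2) \<in> borel_measurable (shexp_sample J mu sg)"
    by measurable
  fix \<omega>
  have "\<bar>\<phi> (sample_min J \<omega>)\<bar> \<le> K + sample_l1 J \<omega>"
    using bound[of "sample_min J \<omega>"] abs_sample_min_le[OF J, of \<omega>] by simp
  also have "\<dots> \<le> (1 + K) * (1 + sample_l1 J \<omega>)"
    using K sample_l1_nonneg[of J \<omega>] by (simp add: algebra_simps)
  finally have "\<bar>\<phi> (sample_min J \<omega>)\<bar>\<^sup>2 \<le> ((1 + K) * (1 + sample_l1 J \<omega>))\<^sup>2"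
    by (rule power_mono) simp
  then show "\<bar>(\<phi> (sample_min J \<omega>))\<^sup>2\<bar> \<le> (1 + K)\<^sup>2 * (1 + sample_l1 J \<omega>)\<^sup>2"
    by (simp add: power_mult_distrib)
qed

text \<open>In effect, the minimum and the spread of the sample are independent, with mean spread
  \<open>(k - 1) sg\<close> and mean squared spread \<open>k (k - 1) sg\<^sup>2\<close>.\<close>
lemma integral_quadratic_in_spread:
  fixes \<psi> \<phi> :: "real \<Rightarrow> real"
  assumes sg: "0 < sg" and J: "finite J" "J \<noteq> {}"
    and [measurable]: "\<psi> \<in> borel_measurable borel" "\<phi> \<in> borel_measurable borel"
    and \<psi>_int: "integrable (shexp_sample J mu sg) (\<lambda>\<omega>. \<psi> (sample_min J \<omega>))"
    and \<phi>_bound: "\<And>x. \<bar>\<phi> x\<bar> \<le> A + B * \<bar>x\<bar>" and A: "0 \<le> A" and B: "0 \<le> B"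
  shows "(\<integral>\<omega>. \<psi> (sample_min J \<omega>) + sample_spread J \<omega> * \<phi> (sample_min J \<omega>) + k * (sample_spread J \<omega>)\<^sup>2
            \<partial>shexp_sample J mu sg)
       = (\<integral>\<omega>. \<psi> (sample_min J \<omega>) \<partial>shexp_sample J mu sg)
         + (real (card J) - 1) * sg * (\<integral>\<omega>. \<phi> (sample_min J \<omega>) \<partial>shexp_sample J mu sg)
         + k * (card J * (real (card J) - 1) * sg\<^sup>2)"
proof -
  let ?Q = "shexp_sample J mu sg"
  note SM = integral_spread_mult_min[OF sg J _ \<phi>_bound A B] and SS = integral_spread_sq[OF sg J]
  have "(\<integral>\<omega>. \<psi> (sample_min J \<omega>) + sample_spread J \<omega> * \<phi> (sample_min J \<omega>) + k * (sample_spread J \<omega>)\<^sup>2 \<partial>?Q)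
      = (\<integral>\<omega>. \<psi> (sample_min J \<omega>) + sample_spread J \<omega> * \<phi> (sample_min J \<omega>) \<partial>?Q)
        + (\<integral>\<omega>. k * (sample_spread J \<omega>)\<^sup>2 \<partial>?Q)"
    using \<psi>_int SM(1) SS(1) by (intro Bochner_Integration.integral_add Bochner_Integration.integrable_add
        Bochner_Integration.integrable_mult_right) simp_all
  also have "(\<integral>\<omega>. \<psi> (sample_min J \<omega>) + sample_spread J \<omega> * \<phi> (sample_min J \<omega>) \<partial>?Q)
      = (\<integral>\<omega>. \<psi> (sample_min J \<omega>) \<partial>?Q) + (\<integral>\<omega>. sample_spread J \<omega> * \<phi> (sample_min J \<omega>) \<partial>?Q)"
    using \<psi>_int SM(1) by (rule Bochner_Integration.integral_add) simp
  finally show ?thesis using SM(2) SS(2) by simp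
qed

section \<open>Closed form of the risk\<close>

definition selection_error :: "real \<Rightarrow> real \<Rightarrow> real \<Rightarrow> real \<Rightarrow> real" where
  "selection_error mu1 mu2 x y = min x y - (if x \<le> y then mu1 else mu2)"

definition scaled_gap :: "nat \<Rightarrow> real \<Rightarrow> real \<Rightarrow> real \<Rightarrow> real" where
  "scaled_gap n mu1 mu2 sg = real n * (mu2 - mu1) / sg"

lemma borel_measurable_selection_error[measurable]: "selection_error mu1 mu2 a \<in> borel_measurable borel"
  unfolding selection_error_def by measurable

lemma abs_selection_error_le: "\<bar>selection_error mu1 mu2 a m\<bar> \<le> (\<bar>a - mu1\<bar> + \<bar>mu2\<bar>) + \<bar>m\<bar>"
  by (auto simp: selection_error_def min_def)

lemma selection_error_eq_min_error:
  assumes sg: "0 < sg" and n: "1 \<le> n"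
  shows "selection_error mu1 mu2 a (mu2 + sg * (t / real n)) = (sg / real n) * min_error (scaled_gap n mu1 mu2 sg) (real n * (a - mu1) / sg) t"
proof -
  define b where "b = sg / real n"
  define s1 where "s1 = real n * (a - mu1) / sg"
  define d where "d = scaled_gap n mu1 mu2 sg"
  have b: "0 < b" using sg n by (simp add: b_def)
  have a: "a = mu1 + b * s1" using sg n by (simp add: b_def s1_def field_simps)
  have m2: "mu2 = mu1 + b * d" using sg n by (simp add: b_def d_def scaled_gap_def field_simps)
  have nz: "real n \<noteq> 0" using n by simp
  have y: "mu2 + sg * (t / real n) = mu1 + b * (d + t)" using m2 nz by (simp add: b_def field_simps)
  have iff: "a \<le> mu2 + sg * (t / real n) \<longleftrightarrow> s1 \<le> t + d"
  proof -
    have "a \<le> mu2 + sg * (t / real n) \<longleftrightarrow> mu1 + b * s1 \<le> mu1 + b * (d + t)" using a y by simp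
    also have "\<dots> \<longleftrightarrow> b * s1 \<le> b * (t + d)" by (simp add: algebra_simps)
    also have "\<dots> \<longleftrightarrow> s1 \<le> t + d" using b by (rule mult_le_cancel_left_pos)
    finally show ?thesis .
  qed
  have "selection_error mu1 mu2 a (mu2 + sg * (t / real n)) = b * min_error d s1 t"
  proof (cases "s1 \<le> t + d")
    case True
    then have "a \<le> mu2 + sg * (t / real n)" using iff by simp
    then have "selection_error mu1 mu2 a (mu2 + sg * (t / real n)) = a - mu1" by (simp add: selection_error_def min_def)
    then show ?thesis using True a by (simp add: min_error_def)
  next
    case False
    then have "\<not> a \<le> mu2 + sg * (t / real n)" using iff by simp
    then have "selection_error mu1 mu2 a (mu2 + sg * (t / real n)) = mu2 + sg * (t / real n) - mu2" by (simp add: selection_error_def min_def)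
    then show ?thesis using False by (simp add: min_error_def b_def)
  qed
  then show ?thesis by (simp add: b_def s1_def d_def)
qed

lemma has_exp1_expect_affine_min_error:
  "has_exp1_expect (\<lambda>t. b * min_error \<delta> s t - k) (b * cond_moment1 \<delta> s - k)"
  using has_exp1_expect_add[OF has_exp1_expect_cmult[OF has_exp1_expect_min_error, of b] has_exp1_expect_const[of "- k"]]
  by simp

lemma has_exp1_expect_affine_min_error_sq:
  "has_exp1_expect (\<lambda>t. (b * min_error \<delta> s t - k)\<^sup>2)
     (b\<^sup>2 * cond_moment2 \<delta> s - 2 * k * b * cond_moment1 \<delta> s + k\<^sup>2)"
proof -
  have "has_exp1_expect (\<lambda>t. b\<^sup>2 * (min_error \<delta> s t)\<^sup>2 + ((- 2 * k * b) * min_error \<delta> s t + k\<^sup>2))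
      (b\<^sup>2 * cond_moment2 \<delta> s + ((- 2 * k * b) * cond_moment1 \<delta> s + k\<^sup>2))"
    by (intro has_exp1_expect_add has_exp1_expect_cmult has_exp1_expect_min_error
        has_exp1_expect_min_error_sq has_exp1_expect_const)
  then show ?thesis
    by (rule has_exp1_expect_cong) (simp_all add: power2_eq_square algebra_simps)
qed

text \<open>The conditional risk given the first sample, as a function of its minimum \<open>a\<close> and its
  spread \<open>s\<close>.\<close>
definition inner_risk :: "nat \<Rightarrow> real \<Rightarrow> real \<Rightarrow> real \<Rightarrow> real \<Rightarrow> real \<Rightarrow> real \<Rightarrow> real" where
  "inner_risk n mu1 mu2 sg c a s =
     (1 / sg\<^sup>2) * (((sg / real n)\<^sup>2 * cond_moment2 (scaled_gap n mu1 mu2 sg) (real n * (a - mu1) / sg)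
        - 2 * (c * s) * (sg / real n) * cond_moment1 (scaled_gap n mu1 mu2 sg) (real n * (a - mu1) / sg)
        + (c * s)\<^sup>2)
      + (real n - 1) * sg * (- 2 * c * ((sg / real n) * cond_moment1 (scaled_gap n mu1 mu2 sg) (real n * (a - mu1) / sg) - c * s))
      + c\<^sup>2 * (real n * (real n - 1) * sg\<^sup>2))"

lemma integral_inner_risk:
  assumes sg: "0 < sg" and n: "1 \<le> n" and B: "finite B" "card B = n"
  shows "(\<integral>y. ((selection_error mu1 mu2 a (sample_min B y) - c * (s + sample_spread B y)) / sg)\<^sup>2
            \<partial>shexp_sample B mu2 sg)
       = inner_risk n mu1 mu2 sg c a s"
proof -
  let ?Q = "shexp_sample B mu2 sg"
  let ?b = "sg / real n" and ?u = "real n * (a - mu1) / sg" and ?d = "scaled_gap n mu1 mu2 sg"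
  let ?\<phi> = "\<lambda>m. selection_error mu1 mu2 a m - c * s"
  let ?K = "\<bar>a - mu1\<bar> + \<bar>mu2\<bar> + \<bar>c * s\<bar>"
  have Bne: "B \<noteq> {}" using B n by auto
  have standard: "?\<phi> (mu2 + sg * (t / card B)) = ?b * min_error ?d ?u t - c * s" for t
    using selection_error_eq_min_error[OF sg n] B(2) by simp
  have bound: "\<bar>?\<phi> m\<bar> \<le> ?K + \<bar>m\<bar>" for m
    using abs_selection_error_le[of mu1 mu2 a m] abs_triangle_ineq4[of "selection_error mu1 mu2 a m" "c * s"]
    by linarith
  have lin_bound: "\<bar>- 2 * c * ?\<phi> m\<bar> \<le> 2 * \<bar>c\<bar> * ?K + 2 * \<bar>c\<bar> * \<bar>m\<bar>" for m
  proof -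
    have "\<bar>- 2 * c * ?\<phi> m\<bar> = 2 * \<bar>c\<bar> * \<bar>?\<phi> m\<bar>" by (simp add: abs_mult)
    also have "\<dots> \<le> 2 * \<bar>c\<bar> * (?K + \<bar>m\<bar>)" by (intro mult_left_mono bound) simp
    finally show ?thesis by (simp add: algebra_simps)
  qed
  have "(\<lambda>y. ((selection_error mu1 mu2 a (sample_min B y) - c * (s + sample_spread B y)) / sg)\<^sup>2)
      = (\<lambda>y. (1 / sg\<^sup>2) * ((?\<phi> (sample_min B y))\<^sup>2 + sample_spread B y * (- 2 * c * ?\<phi> (sample_min B y))
               + c\<^sup>2 * (sample_spread B y)\<^sup>2))"
    using sg by (simp add: power2_eq_square field_simps)
  then have "(\<integral>y. ((selection_error mu1 mu2 a (sample_min B y) - c * (s + sample_spread B y)) / sg)\<^sup>2 \<partial>?Q)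
      = (1 / sg\<^sup>2) * ((\<integral>y. (?\<phi> (sample_min B y))\<^sup>2 \<partial>?Q)
          + (real n - 1) * sg * (\<integral>y. - 2 * c * ?\<phi> (sample_min B y) \<partial>?Q) + c\<^sup>2 * (n * (real n - 1) * sg\<^sup>2))"
    using integral_quadratic_in_spread[OF sg B(1) Bne _ _ _ lin_bound, of "\<lambda>m. (?\<phi> m)\<^sup>2" mu2 "c\<^sup>2"]
      integrable_sample_min_square_linear[OF sg B(1) Bne _ bound, of mu2] B(2)
    by simp
  also have "(\<integral>y. (?\<phi> (sample_min B y))\<^sup>2 \<partial>?Q) = exp1_expect (\<lambda>t. (?b * min_error ?d ?u t - c * s)\<^sup>2)"
    using integral_sample_min[OF sg B(1) Bne, of "\<lambda>m. (?\<phi> m)\<^sup>2" mu2] standard by simp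
  also have "\<dots> = ?b\<^sup>2 * cond_moment2 ?d ?u - 2 * (c * s) * ?b * cond_moment1 ?d ?u + (c * s)\<^sup>2"
    by (rule has_exp1_expectD[OF has_exp1_expect_affine_min_error_sq])
  also have "(\<integral>y. - 2 * c * ?\<phi> (sample_min B y) \<partial>?Q) = exp1_expect (\<lambda>t. - 2 * c * (?b * min_error ?d ?u t - c * s))"
    using integral_sample_min[OF sg B(1) Bne, of "\<lambda>m. - 2 * c * ?\<phi> m" mu2] standard by simp
  also have "\<dots> = - 2 * c * (?b * cond_moment1 ?d ?u - c * s)"
    by (rule has_exp1_expectD[OF has_exp1_expect_cmult[OF has_exp1_expect_affine_min_error]])
  finally show ?thesis unfolding inner_risk_def by simp
qed

definition risk_formula :: "nat \<Rightarrow> real \<Rightarrow> real \<Rightarrow> real" where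
  "risk_formula n c m = moment2 m / (real n)\<^sup>2 - 4 * c * (real n - 1) * moment1 m / real n
     + 2 * c\<^sup>2 * (real n - 1) * (2 * real n - 1)"

lemma integral_outer_risk:
  assumes sg: "0 < sg" and n: "1 \<le> n" and B: "finite B" "card B = n"
  shows "(\<integral>x. inner_risk n mu1 mu2 sg c (sample_min B x) (sample_spread B x) \<partial>shexp_sample B mu1 sg)
       = risk_formula n c \<bar>scaled_gap n mu1 mu2 sg\<bar>"
proof -
  let ?Q = "shexp_sample B mu1 sg"
  define b where "b = sg / real n"
  define d where "d = scaled_gap n mu1 mu2 sg"
  define u where "u = (\<lambda>a. real (card B) * (a - mu1) / sg)"
  define K where "K = c\<^sup>2 * (real n * (real n - 1) * sg\<^sup>2)"
  define \<psi> where "\<psi> = (\<lambda>a. b\<^sup>2 * cond_moment2 d (u a) + (- 2 * c * (real n - 1) * sg * b) * cond_moment1 d (u a) + K)"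
  define \<phi> where "\<phi> = (\<lambda>a. - 2 * c * b * cond_moment1 d (u a) + 2 * c\<^sup>2 * (real n - 1) * sg)"
  have Bne: "B \<noteq> {}" using B n by auto
  have meas[measurable]: "\<psi> \<in> borel_measurable borel" "\<phi> \<in> borel_measurable borel"
    unfolding \<psi>_def \<phi>_def u_def by measurable
  have "inner_risk n mu1 mu2 sg c a s = (1 / sg\<^sup>2) * (\<psi> a + s * \<phi> a + c\<^sup>2 * s\<^sup>2)" for a s
    using sg n B(2) unfolding inner_risk_def \<psi>_def \<phi>_def K_def b_def d_def u_def
    by (simp add: field_simps power2_eq_square)
  moreover have \<psi>_int: "integrable ?Q (\<lambda>x. \<psi> (sample_min B x))"
    using integrable_sample_min_cond_moments[OF sg B(1) Bne, of mu1 d]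
    unfolding \<psi>_def u_def
    by (intro Bochner_Integration.integrable_add Bochner_Integration.integrable_mult_right
        finite_measure.integrable_const prob_space.finite_measure prob_space_shexp_sample[OF sg]) auto
  moreover have \<phi>_bound: "\<bar>\<phi> a\<bar> \<le> (\<bar>- 2 * c * b\<bar> * (2 + \<bar>d\<bar> + card B / sg * \<bar>mu1\<bar>) + \<bar>2 * c\<^sup>2 * (real n - 1) * sg\<bar>)
      + (\<bar>- 2 * c * b\<bar> * (card B / sg)) * \<bar>a\<bar>" for a
    unfolding \<phi>_def u_def using sg by (rule abs_affine_cond_moment1_le) simp
  ultimately have "(\<integral>x. inner_risk n mu1 mu2 sg c (sample_min B x) (sample_spread B x) \<partial>?Q)
      = (1 / sg\<^sup>2) * ((\<integral>x. \<psi> (sample_min B x) \<partial>?Q) + (real n - 1) * sg * (\<integral>x. \<phi> (sample_min B x) \<partial>?Q)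
          + c\<^sup>2 * (n * (real n - 1) * sg\<^sup>2))"
    using integral_quadratic_in_spread[OF sg B(1) Bne meas \<psi>_int \<phi>_bound _ _, of "c\<^sup>2"] B(2) sg by simp
  also have "(\<integral>x. \<psi> (sample_min B x) \<partial>?Q) = b\<^sup>2 * moment2 \<bar>d\<bar> + (- 2 * c * (real n - 1) * sg * b) * moment1 \<bar>d\<bar> + K"
    unfolding \<psi>_def u_def by (rule integral_cond_moments_sample_min[OF sg B(1) Bne])
  also have "(\<integral>x. \<phi> (sample_min B x) \<partial>?Q) = - 2 * c * b * moment1 \<bar>d\<bar> + 2 * c\<^sup>2 * (real n - 1) * sg"
    using integral_cond_moments_sample_min[OF sg B(1) Bne, of mu1 0 d "- 2 * c * b"]
    unfolding \<phi>_def u_def by simp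
  also have "(1 / sg\<^sup>2) * ((b\<^sup>2 * moment2 \<bar>d\<bar> + (- 2 * c * (real n - 1) * sg * b) * moment1 \<bar>d\<bar> + K)
        + (real n - 1) * sg * (- 2 * c * b * moment1 \<bar>d\<bar> + 2 * c\<^sup>2 * (real n - 1) * sg)
        + c\<^sup>2 * (n * (real n - 1) * sg\<^sup>2)) = risk_formula n c \<bar>d\<bar>"
    unfolding risk_formula_def K_def b_def using sg n by (simp add: field_simps power2_eq_square)
  finally show ?thesis by (simp add: d_def)
qed

lemma Xmin_eq_sample_min: "Xmin n \<omega> i = sample_min ({i} \<times> {..<n}) \<omega>"
proof -
  have "(\<lambda>p. \<omega> p) ` ({i} \<times> {..<n}) = (\<lambda>j. \<omega> (i, j)) ` {..<n}" by auto
  then show ?thesis unfolding Xmin_def sample_min_def by simp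
qed

lemma sum_Times_singleton: "(\<Sum>p\<in>{i} \<times> A. f p) = (\<Sum>j\<in>A. f (i, j))"
proof -
  have "(\<Sum>p\<in>{i} \<times> A. f p) = (\<Sum>p\<in>(\<lambda>j. (i, j)) ` A. f p)"
    by (intro sum.cong) auto
  also have "\<dots> = (\<Sum>j\<in>A. f (i, j))"
    by (subst sum.reindex) (auto simp: inj_on_def)
  finally show ?thesis .
qed

lemma Sstat_eq_sample_spread: "Sstat n \<omega> = sample_spread ({1} \<times> {..<n}) \<omega> + sample_spread ({2} \<times> {..<n}) \<omega>"
  unfolding Sstat_def sample_spread_def sum_Times_singleton Xmin_eq_sample_min by simp

lemma risk_integrand_eq:
  "((d_est n c \<omega> - muS n mu1 mu2 \<omega>) / sg)\<^sup>2
   = ((selection_error mu1 mu2 (sample_min ({1} \<times> {..<n}) \<omega>) (sample_min ({2} \<times> {..<n}) \<omega>)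
        - c * (sample_spread ({1} \<times> {..<n}) \<omega> + sample_spread ({2} \<times> {..<n}) \<omega>)) / sg)\<^sup>2"
  unfolding d_est_def muS_def Z1_def selection_error_def Sstat_eq_sample_spread Xmin_eq_sample_min by (simp add: algebra_simps)

lemma sample_law_eq_PiM:
  "sample_law n mu1 mu2 sg
     = PiM ({1} \<times> {..<n} \<union> {2} \<times> {..<n}) (\<lambda>p. shexp_measure (if fst p = (1::nat) then mu1 else mu2) sg)"
proof -
  have I: "{1, 2} \<times> {..<n} = {1::nat} \<times> {..<n} \<union> {2} \<times> {..<n}" by auto
  have M: "(\<lambda>(i, j). density lborel (\<lambda>x. ennreal (shexp_density (if i = 1 then mu1 else mu2) sg x)))
      = (\<lambda>p. shexp_measure (if fst p = (1::nat) then mu1 else mu2) sg)"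
    by (auto simp: fun_eq_iff shexp_measure_def)
  show ?thesis
    unfolding sample_law_def I M ..
qed

lemma abs_risk_integrand_le:
  assumes I: "finite I" and B: "B1 \<subseteq> I" "B2 \<subseteq> I" "B1 \<noteq> {}" "B2 \<noteq> {}"
  shows "\<bar>selection_error mu1 mu2 (sample_min B1 \<omega>) (sample_min B2 \<omega>) - c * (sample_spread B1 \<omega> + sample_spread B2 \<omega>)\<bar>
       \<le> (\<bar>mu1\<bar> + \<bar>mu2\<bar> + (2 + 2 * \<bar>c\<bar> * (1 + real (card I)))) * (1 + sample_l1 I \<omega>)"
proof -
  let ?L = "sample_l1 I \<omega>" and ?n = "real (card I)"
  let ?A0 = "\<bar>mu1\<bar> + \<bar>mu2\<bar>" and ?A1 = "2 + 2 * \<bar>c\<bar> * (1 + ?n)"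
  have L: "0 \<le> ?L" using sample_l1_nonneg .
  have spread: "\<bar>sample_spread B \<omega>\<bar> \<le> (1 + ?n) * ?L" if "B \<subseteq> I" "B \<noteq> {}" for B
  proof -
    have "finite B" "card B \<le> card I" "sample_l1 B \<omega> \<le> ?L"
      using finite_subset[OF that(1) I] card_mono[OF I that(1)] sample_l1_mono[OF I that(1)] by auto
    then have "(1 + real (card B)) * sample_l1 B \<omega> \<le> (1 + ?n) * ?L"
      by (intro mult_mono) (auto simp: sample_l1_nonneg)
    then show ?thesis using abs_sample_spread_le[OF \<open>finite B\<close> that(2), of \<omega>] by linarith
  qed
  have min: "\<bar>sample_min B \<omega>\<bar> \<le> ?L" if "B \<subseteq> I" "B \<noteq> {}" for B
    using abs_sample_min_le[OF finite_subset[OF that(1) I] that(2), of \<omega>] sample_l1_mono[OF I that(1), of \<omega>]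
    by linarith
  have "\<bar>selection_error mu1 mu2 (sample_min B1 \<omega>) (sample_min B2 \<omega>)\<bar> \<le> ?A0 + 2 * ?L"
    using abs_selection_error_le[of mu1 mu2 "sample_min B1 \<omega>" "sample_min B2 \<omega>"] min[OF B(1,3)] min[OF B(2,4)]
      abs_triangle_ineq4[of "sample_min B1 \<omega>" mu1]
    by linarith
  moreover have "\<bar>c * (sample_spread B1 \<omega> + sample_spread B2 \<omega>)\<bar> \<le> \<bar>c\<bar> * (2 * ((1 + ?n) * ?L))"
    unfolding abs_mult using spread[OF B(1,3)] spread[OF B(2,4)]
      abs_triangle_ineq[of "sample_spread B1 \<omega>" "sample_spread B2 \<omega>"]
    by (intro mult_left_mono) auto
  ultimately have "\<bar>selection_error mu1 mu2 (sample_min B1 \<omega>) (sample_min B2 \<omega>)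
        - c * (sample_spread B1 \<omega> + sample_spread B2 \<omega>)\<bar> \<le> ?A0 + ?A1 * ?L"
    using abs_triangle_ineq4[of "selection_error mu1 mu2 (sample_min B1 \<omega>) (sample_min B2 \<omega>)"
        "c * (sample_spread B1 \<omega> + sample_spread B2 \<omega>)"]
    by (simp add: algebra_simps)
  also have "\<dots> \<le> (?A0 + ?A1) * (1 + ?L)"
    using L by (simp add: algebra_simps)
  finally show ?thesis .
qed

lemma integrable_risk_integrand:
  fixes M :: "'i \<Rightarrow> real measure"
  assumes sg: "0 < sg" and I: "finite I" and B: "B1 \<subseteq> I" "B2 \<subseteq> I" "B1 \<noteq> {}" "B2 \<noteq> {}"
    and P: "\<And>i. i \<in> I \<Longrightarrow> prob_space (M i)" and S: "\<And>i. i \<in> I \<Longrightarrow> sets (M i) = sets borel"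
    and square: "\<And>i. i \<in> I \<Longrightarrow> integrable (M i) (\<lambda>x. x\<^sup>2)"
  shows "integrable (PiM I M) (\<lambda>\<omega>. ((selection_error mu1 mu2 (sample_min B1 \<omega>) (sample_min B2 \<omega>)
            - c * (sample_spread B1 \<omega> + sample_spread B2 \<omega>)) / sg)\<^sup>2)"
proof (rule integrable_PiM_quadratic_bound[OF I P square])
  have fin: "finite B1" "finite B2" using finite_subset[OF B(1) I] finite_subset[OF B(2) I] .
  have [measurable]: "sample_min B1 \<in> borel_measurable (PiM I M)" "sample_min B2 \<in> borel_measurable (PiM I M)"
    "sample_spread B1 \<in> borel_measurable (PiM I M)" "sample_spread B2 \<in> borel_measurable (PiM I M)"
    using fin B S by (auto intro!: borel_measurable_sample_min borel_measurable_sample_spread)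
  show "(\<lambda>\<omega>. ((selection_error mu1 mu2 (sample_min B1 \<omega>) (sample_min B2 \<omega>)
            - c * (sample_spread B1 \<omega> + sample_spread B2 \<omega>)) / sg)\<^sup>2) \<in> borel_measurable (PiM I M)"
    unfolding selection_error_def by measurable
  fix \<omega> :: "'i \<Rightarrow> real"
  let ?C = "\<bar>mu1\<bar> + \<bar>mu2\<bar> + (2 + 2 * \<bar>c\<bar> * (1 + real (card I)))"
  have "\<bar>selection_error mu1 mu2 (sample_min B1 \<omega>) (sample_min B2 \<omega>)
        - c * (sample_spread B1 \<omega> + sample_spread B2 \<omega>)\<bar>\<^sup>2 \<le> (?C * (1 + sample_l1 I \<omega>))\<^sup>2"
    by (rule power_mono[OF abs_risk_integrand_le[OF I B]]) simp
  then show "\<bar>((selection_error mu1 mu2 (sample_min B1 \<omega>) (sample_min B2 \<omega>)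
        - c * (sample_spread B1 \<omega> + sample_spread B2 \<omega>)) / sg)\<^sup>2\<bar>
      \<le> (?C\<^sup>2 / sg\<^sup>2) * (1 + (\<Sum>j\<in>I. \<bar>\<omega> j\<bar>))\<^sup>2"
    using sg by (simp add: sample_l1_def power_mult_distrib power_divide divide_right_mono)
qed

lemma risk_eq_risk_formula:
  assumes sg: "0 < sg" and n: "1 \<le> n"
  shows "risk n c mu1 mu2 sg = risk_formula n c (mu_param n mu1 mu2 sg)"
proof -
  let ?B1 = "{1::nat} \<times> {..<n}" and ?B2 = "{2::nat} \<times> {..<n}"
  let ?M = "\<lambda>p. shexp_measure (if fst p = (1::nat) then mu1 else mu2) sg"
  let ?R = "\<lambda>\<omega>. ((selection_error mu1 mu2 (sample_min ?B1 \<omega>) (sample_min ?B2 \<omega>)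
                  - c * (sample_spread ?B1 \<omega> + sample_spread ?B2 \<omega>)) / sg)\<^sup>2"
  have fin: "finite ?B1" "finite ?B2" and card: "card ?B1 = n" "card ?B2 = n"
    by (simp_all add: card_cartesian_product)
  have P: "prob_space (?M p)" for p using sg by (simp add: prob_space_shexp_measure)
  have psf: "product_sigma_finite ?M"
    unfolding product_sigma_finite_def using P prob_space_imp_sigma_finite by blast
  have R: "integrable (PiM (?B1 \<union> ?B2) ?M) ?R"
    using n by (intro integrable_risk_integrand[OF sg] P integrable_shexp_measure_square[OF sg])
      (auto simp: lessThan_empty_iff)
  have inner: "(\<integral>y. ?R (merge ?B1 ?B2 (x, y)) \<partial>PiM ?B2 ?M) = inner_risk n mu1 mu2 sg c (sample_min ?B1 x) (sample_spread ?B1 x)"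
    for x
  proof -
    have "sample_min ?B1 (merge ?B1 ?B2 (x, y)) = sample_min ?B1 x" "sample_spread ?B1 (merge ?B1 ?B2 (x, y)) = sample_spread ?B1 x"
      "sample_min ?B2 (merge ?B1 ?B2 (x, y)) = sample_min ?B2 y" "sample_spread ?B2 (merge ?B1 ?B2 (x, y)) = sample_spread ?B2 y" for y
      by (auto intro!: sample_min_cong sample_spread_cong simp: merge_def)
    moreover have "PiM ?B2 ?M = shexp_sample ?B2 mu2 sg" by (rule PiM_cong) auto
    ultimately show ?thesis
      using integral_inner_risk[OF sg n fin(2) card(2), of mu2 mu1 "sample_min ?B1 x" c "sample_spread ?B1 x"]
      by simp
  qed
  have "risk n c mu1 mu2 sg = integral\<^sup>L (PiM (?B1 \<union> ?B2) ?M) ?R"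
    unfolding risk_def sample_law_eq_PiM risk_integrand_eq ..
  also have "\<dots> = (\<integral>x. (\<integral>y. ?R (merge ?B1 ?B2 (x, y)) \<partial>PiM ?B2 ?M) \<partial>PiM ?B1 ?M)"
    by (rule product_sigma_finite.product_integral_fold[OF psf _ fin R]) auto
  also have "\<dots> = (\<integral>x. inner_risk n mu1 mu2 sg c (sample_min ?B1 x) (sample_spread ?B1 x) \<partial>shexp_sample ?B1 mu1 sg)"
    unfolding inner by (rule Bochner_Integration.integral_cong) (auto intro!: PiM_cong)
  also have "\<dots> = risk_formula n c \<bar>scaled_gap n mu1 mu2 sg\<bar>"
    by (rule integral_outer_risk[OF sg n fin(1) card(1)])
  also have "\<bar>scaled_gap n mu1 mu2 sg\<bar> = mu_param n mu1 mu2 sg"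
  proof -
    have "max mu1 mu2 - min mu1 mu2 = \<bar>mu2 - mu1\<bar>" by (auto simp: max_def min_def)
    then show ?thesis using sg by (simp add: scaled_gap_def mu_param_def abs_mult abs_divide)
  qed
  finally show ?thesis .
qed

lemma Rmu_eq_risk_formula:
  assumes n: "1 \<le> n" and m: "0 \<le> m"
  shows "Rmu n c m = risk_formula n c m"
proof -
  have "mu_param n 0 (m / real n) 1 = m"
    using n m by (simp add: mu_param_def)
  then show ?thesis
    unfolding Rmu_def using risk_eq_risk_formula[of 1 n c 0 "m / real n"] n by simp
qed

section \<open>Comparison of the risks\<close>

lemma risk_formula_diff:
  "risk_formula n c m - risk_formula n b m
     = 2 * (real n - 1) * (c - b) * ((2 * real n - 1) * (c + b) - 2 * moment1 m / real n)"
  unfolding risk_formula_def by (simp add: field_simps power2_eq_square)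

lemma moment1_ge_half: "0 \<le> m \<Longrightarrow> 1 / 2 \<le> moment1 m"
proof -
  have "1 + m \<le> exp m" by simp
  then have "exp (- m) * (1 + m) \<le> 1" by (simp add: exp_minus field_simps)
  then show ?thesis by (simp add: moment1_def)
qed

lemma moment1_le_1: "0 \<le> m \<Longrightarrow> moment1 m \<le> 1"
  by (simp add: moment1_def)

lemma moment1_ge: "0 \<le> m \<Longrightarrow> 1 - 1 / (1 + m) \<le> moment1 m"
proof -
  assume m: "0 \<le> m"
  have "1 + m + m\<^sup>2 / 2 \<le> exp m" using m by (rule exp_lower_Taylor_quadratic)
  then have "(1 + m) * (1 + m) / exp m \<le> 2" by (simp add: power2_eq_square field_simps)
  then have "exp (- m) * (1 + m) \<le> 2 / (1 + m)" using m by (simp add: exp_minus field_simps)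
  then show ?thesis by (simp add: moment1_def field_simps)
qed

lemma k0_eq: "1 \<le> n \<Longrightarrow> (2 * real n - 1) * (2 * k0 n) = 1 / real n"
  by (simp add: k0_def field_simps)

lemma k2_eq: "1 \<le> n \<Longrightarrow> (2 * real n - 1) * (2 * k2 n) = 2 / real n"
  by (simp add: k2_def field_simps)

lemma risk_formula_strict_below_k0:
  assumes n: "2 \<le> n" and bc: "b < c" "c \<le> k0 n" and m: "0 \<le> m"
  shows "risk_formula n c m < risk_formula n b m"
proof -
  have "(2 * real n - 1) * (c + b) < (2 * real n - 1) * (2 * k0 n)"
    using bc n by (intro mult_strict_left_mono) auto
  also have "\<dots> \<le> 2 * moment1 m / real n"
    using k0_eq[of n] moment1_ge_half[OF m] n by (simp add: divide_right_mono)
  finally have "(2 * real n - 1) * (c + b) - 2 * moment1 m / real n < 0" by simp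
  moreover have "0 < 2 * (real n - 1) * (c - b)" using bc n by simp
  ultimately have "risk_formula n c m - risk_formula n b m < 0"
    unfolding risk_formula_diff by (simp add: mult_pos_neg)
  then show ?thesis by simp
qed

lemma risk_formula_strict_above_k2:
  assumes n: "2 \<le> n" and bc: "k2 n \<le> c" "c < b" and m: "0 \<le> m"
  shows "risk_formula n c m < risk_formula n b m"
proof -
  have "2 * moment1 m / real n \<le> (2 * real n - 1) * (2 * k2 n)"
    using k2_eq[of n] moment1_le_1[OF m] n by (simp add: divide_right_mono)
  also have "\<dots> < (2 * real n - 1) * (c + b)"
    using bc n by (intro mult_strict_left_mono) auto
  finally have "0 < (2 * real n - 1) * (c + b) - 2 * moment1 m / real n" by simp
  moreover have "2 * (real n - 1) * (c - b) < 0" using bc n by (simp add: mult_pos_neg)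
  ultimately have "risk_formula n c m - risk_formula n b m < 0"
    unfolding risk_formula_diff by (simp add: mult_neg_pos)
  then show ?thesis by simp
qed

lemma risk_formula_less_at_0:
  assumes n: "2 \<le> n" and bc: "k0 n \<le> c" "c < b"
  shows "risk_formula n c 0 < risk_formula n b 0"
proof -
  have "2 * moment1 0 / real n = (2 * real n - 1) * (2 * k0 n)"
    using k0_eq[of n] n by (simp add: moment1_def)
  also have "\<dots> < (2 * real n - 1) * (c + b)"
    using bc n by (intro mult_strict_left_mono) auto
  finally have "0 < (2 * real n - 1) * (c + b) - 2 * moment1 0 / real n" by simp
  moreover have "2 * (real n - 1) * (c - b) < 0" using bc n by (simp add: mult_pos_neg)
  ultimately have "risk_formula n c 0 - risk_formula n b 0 < 0"
    unfolding risk_formula_diff by (simp add: mult_neg_pos)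
  then show ?thesis by simp
qed

text \<open>For \<open>b < c \<le> k2\<close> the risk difference turns in favour of \<open>c\<close> for large \<open>m\<close>, as
  \<open>moment1 m\<close> tends to \<open>1\<close>; the explicit bound \<open>moment1_ge\<close> yields a witness.\<close>
lemma risk_formula_less_somewhere:
  assumes n: "2 \<le> n" and bc: "b < c" "c \<le> k2 n"
  shows "\<exists>m\<ge>0. risk_formula n c m < risk_formula n b m"
proof -
  define q where "q = (2 * real n - 1) * (b + c) * real n / 2"
  have "(2 * real n - 1) * (b + c) < (2 * real n - 1) * (2 * k2 n)"
    using bc n by (intro mult_strict_left_mono) auto
  then have "(2 * real n - 1) * (b + c) < 2 / real n"
    using k2_eq[of n] n by simp
  then have q: "q < 1"
    using n unfolding q_def by (simp add: field_simps)
  define m where "m = 1 / (1 - q)"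
  have m: "0 \<le> m" using q by (simp add: m_def)
  have "(1 - q) * (1 + m) = (1 - q) + 1"
    using q by (simp add: m_def field_simps)
  then have "1 / (1 + m) < 1 - q"
    using q m by (simp add: field_simps)
  then have "q < moment1 m" using moment1_ge[OF m] by simp
  then have "(2 * real n - 1) * (c + b) < 2 * moment1 m / real n"
    using n unfolding q_def by (simp add: field_simps)
  then have "(2 * real n - 1) * (c + b) - 2 * moment1 m / real n < 0" by simp
  moreover have "0 < 2 * (real n - 1) * (c - b)" using bc n by simp
  ultimately have "risk_formula n c m - risk_formula n b m < 0"
    unfolding risk_formula_diff by (simp add: mult_pos_neg)
  with m show ?thesis by auto
qed

definition risk_limit :: "nat \<Rightarrow> real \<Rightarrow> real" where
  "risk_limit n c = 2 / (real n)\<^sup>2 - 4 * c * (real n - 1) / real n + 2 * c\<^sup>2 * (real n - 1) * (2 * real n - 1)"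

lemma risk_formula_tendsto:
  assumes "0 < n"
  shows "(risk_formula n c \<longlongrightarrow> risk_limit n c) at_top"
proof -
  have "(moment1 \<longlongrightarrow> 1) at_top" "(moment2 \<longlongrightarrow> 2) at_top"
    unfolding moment1_def moment2_def by real_asymp+
  then have "((\<lambda>m. moment2 m / (real n)\<^sup>2 - 4 * c * (real n - 1) * moment1 m / real n
                  + 2 * c\<^sup>2 * (real n - 1) * (2 * real n - 1))
             \<longlongrightarrow> 2 / (real n)\<^sup>2 - 4 * c * (real n - 1) * 1 / real n
                  + 2 * c\<^sup>2 * (real n - 1) * (2 * real n - 1)) at_top"
    using assms by (intro tendsto_intros) auto
  then show ?thesis by (simp add: risk_formula_def[abs_def] risk_limit_def)
qed

lemma risk_formula_k2_le_limit:
  assumes n: "2 \<le> n" and m: "0 \<le> m"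
  shows "risk_formula n (k2 n) m \<le> risk_limit n (k2 n)"
proof -
  have p: "0 < 2 * real n - 1" using n by simp
  have "risk_limit n (k2 n) - risk_formula n (k2 n) m
      = exp (- m) / (2 * (real n)\<^sup>2) * ((m\<^sup>2 + 3 * m + 3) - 4 * (real n - 1) * (1 + m) * (real n * k2 n))"
    using n unfolding risk_limit_def risk_formula_def moment1_def moment2_def
    by (simp add: field_simps power2_eq_square)
  also have "real n * k2 n = 1 / (2 * real n - 1)"
    using n p by (simp add: k2_def)
  finally have eq: "risk_limit n (k2 n) - risk_formula n (k2 n) m
      = exp (- m) / (2 * (real n)\<^sup>2) * ((m\<^sup>2 + 3 * m + 3) - 4 * (real n - 1) / (2 * real n - 1) * (1 + m))"
    by simp
  have "4 * (real n - 1) / (2 * real n - 1) * (1 + m) \<le> 2 * (1 + m)"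
    using p m by (intro mult_right_mono) (auto simp: field_simps)
  moreover have "2 * (1 + m) \<le> m\<^sup>2 + 3 * m + 3"
    using m by (simp add: power2_eq_square algebra_simps)
  ultimately have "0 \<le> (m\<^sup>2 + 3 * m + 3) - 4 * (real n - 1) / (2 * real n - 1) * (1 + m)"
    by linarith
  then have "0 \<le> risk_limit n (k2 n) - risk_formula n (k2 n) m"
    unfolding eq by (intro mult_nonneg_nonneg) auto
  then show ?thesis by simp
qed

lemma risk_limit_ge_k2:
  assumes n: "2 \<le> n"
  shows "risk_limit n (k2 n) \<le> risk_limit n c"
proof -
  have "(2 * real n - 1) * k2 n = inverse (real n)"
    using n unfolding k2_def by (simp add: field_simps)
  moreover have "risk_limit n c - risk_limit n (k2 n) - 2 * (real n - 1) * (2 * real n - 1) * (c - k2 n)\<^sup>2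
      = 4 * (real n - 1) * (c - k2 n) * ((2 * real n - 1) * k2 n - inverse (real n))"
    unfolding risk_limit_def by (simp add: divide_inverse algebra_simps power2_eq_square)
  ultimately have "risk_limit n c - risk_limit n (k2 n) = 2 * (real n - 1) * (2 * real n - 1) * (c - k2 n)\<^sup>2"
    by simp
  moreover have "0 \<le> 2 * (real n - 1) * (2 * real n - 1) * (c - k2 n)\<^sup>2"
    using n by simp
  ultimately show ?thesis by simp
qed

lemma admissible_D2_if_between:
  assumes n: "2 \<le> n" and c: "k0 n \<le> c" "c \<le> k2 n"
  shows "admissible_D2 n c"
  unfolding admissible_D2_def
proof
  have n1: "1 \<le> n" using n by simp
  assume "\<exists>b. (\<forall>m\<ge>0. Rmu n b m \<le> Rmu n c m) \<and> (\<exists>m\<ge>0. Rmu n b m < Rmu n c m)"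
  then obtain b m0 where le: "\<And>m. 0 \<le> m \<Longrightarrow> Rmu n b m \<le> Rmu n c m"
    and "Rmu n b m0 < Rmu n c m0"
    by blast
  then have "b \<noteq> c" by auto
  have le': "risk_formula n b m \<le> risk_formula n c m" if "0 \<le> m" for m
    using le[OF that] Rmu_eq_risk_formula[OF n1 that] by simp
  show False
  proof (cases "c < b")
    case True
    then show False using risk_formula_less_at_0[OF n c(1) True] le'[of 0] by simp
  next
    case False
    with \<open>b \<noteq> c\<close> have "b < c" by simp
    then obtain m where "0 \<le> m" "risk_formula n c m < risk_formula n b m"
      using risk_formula_less_somewhere[OF n _ c(2)] by blast
    then show False using le' by (meson not_le)
  qed
qed

lemma not_admissible_D2_outside:
  assumes n: "2 \<le> n" and c: "c < k0 n \<or> k2 n < c"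
  shows "\<not> admissible_D2 n c"
proof -
  have n1: "1 \<le> n" using n by simp
  obtain b where b: "\<And>m. 0 \<le> m \<Longrightarrow> risk_formula n b m < risk_formula n c m"
  proof (cases "c < k0 n")
    case True
    then show ?thesis using that risk_formula_strict_below_k0[OF n True order_refl] by blast
  next
    case False
    with c have "k2 n < c" by simp
    then show ?thesis using that risk_formula_strict_above_k2[OF n order_refl] by blast
  qed
  have "Rmu n b m < Rmu n c m" if "0 \<le> m" for m
    using b[OF that] Rmu_eq_risk_formula[OF n1 that] by simp
  then show ?thesis
    unfolding admissible_D2_def by (meson less_imp_le order_refl)
qed

lemma Rmu_minimax_k2:
  assumes n: "2 \<le> n"
  shows "(SUP m\<in>{0..}. ereal (Rmu n (k2 n) m)) = (INF c. SUP m\<in>{0..}. ereal (Rmu n c m))"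
proof (rule antisym)
  have R: "Rmu n c m = risk_formula n c m" if "0 \<le> m" for c m
    using Rmu_eq_risk_formula[OF _ that] n by simp
  have upper: "(SUP m\<in>{0..}. ereal (Rmu n (k2 n) m)) \<le> ereal (risk_limit n (k2 n))"
    using risk_formula_k2_le_limit[OF n] R by (auto intro!: SUP_least)
  have lower: "ereal (risk_limit n c) \<le> (SUP m\<in>{0..}. ereal (Rmu n c m))" for c
  proof (rule tendsto_upperbound)
    have "eventually (\<lambda>m. risk_formula n c m = Rmu n c m) at_top"
      using eventually_ge_at_top[of "0::real"] by eventually_elim (simp add: R)
    then have "(Rmu n c \<longlongrightarrow> risk_limit n c) at_top"
      using tendsto_cong[of "risk_formula n c" "Rmu n c"] risk_formula_tendsto[of n c] n by simp
    then show "((\<lambda>m. ereal (Rmu n c m)) \<longlongrightarrow> ereal (risk_limit n c)) at_top" by simp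
    show "eventually (\<lambda>m. ereal (Rmu n c m) \<le> (SUP m\<in>{0..}. ereal (Rmu n c m))) at_top"
      using eventually_ge_at_top[of "0::real"] by eventually_elim (auto intro: SUP_upper)
  qed simp
  show "(SUP m\<in>{0..}. ereal (Rmu n (k2 n) m)) \<le> (INF c. SUP m\<in>{0..}. ereal (Rmu n c m))"
  proof (rule INF_greatest)
    fix c
    have "ereal (risk_limit n (k2 n)) \<le> ereal (risk_limit n c)"
      using risk_limit_ge_k2[OF n] by simp
    then show "(SUP m\<in>{0..}. ereal (Rmu n (k2 n) m)) \<le> (SUP m\<in>{0..}. ereal (Rmu n c m))"
      using upper lower[of c] by (meson order_trans)
  qed
  show "(INF c. SUP m\<in>{0..}. ereal (Rmu n c m)) \<le> (SUP m\<in>{0..}. ereal (Rmu n (k2 n) m))"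
    by (rule INF_lower) simp
qed

theorem theorem5p2:
  fixes n :: nat
  assumes "n \<ge> 2"
  shows "(\<forall>c mu1 mu2 sg. sg > 0 \<longrightarrow>
            risk n c mu1 mu2 sg = Rmu n c (mu_param n mu1 mu2 sg))
       \<and> (\<forall>c. k0 n \<le> c \<and> c \<le> k2 n \<longrightarrow> admissible_D2 n c)
       \<and> (\<forall>c. c < k0 n \<or> k2 n < c \<longrightarrow> \<not> admissible_D2 n c)
       \<and> (\<forall>b c m. b < c \<and> c \<le> k0 n \<and> 0 \<le> m \<longrightarrow> Rmu n c m < Rmu n b m)
       \<and> (\<forall>b c m. k2 n \<le> c \<and> c < b \<and> 0 \<le> m \<longrightarrow> Rmu n c m < Rmu n b m)
       \<and> (SUP m\<in>{0..}. ereal (Rmu n (k2 n) m))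
           = (INF c. SUP m\<in>{0..}. ereal (Rmu n c m))"
proof -
  have n: "1 \<le> n" using assms by simp
  have risk: "\<forall>c mu1 mu2 sg. sg > 0 \<longrightarrow> risk n c mu1 mu2 sg = Rmu n c (mu_param n mu1 mu2 sg)"
  proof (intro allI impI)
    fix c mu1 mu2 sg :: real
    assume sg: "sg > 0"
    then have "0 \<le> mu_param n mu1 mu2 sg" by (simp add: mu_param_def)
    then show "risk n c mu1 mu2 sg = Rmu n c (mu_param n mu1 mu2 sg)"
      using risk_eq_risk_formula[OF sg n] Rmu_eq_risk_formula[OF n] by simp
  qed
  have below: "\<forall>b c m. b < c \<and> c \<le> k0 n \<and> 0 \<le> m \<longrightarrow> Rmu n c m < Rmu n b m"
    using risk_formula_strict_below_k0[OF assms] Rmu_eq_risk_formula[OF n] by simp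
  have above: "\<forall>b c m. k2 n \<le> c \<and> c < b \<and> 0 \<le> m \<longrightarrow> Rmu n c m < Rmu n b m"
    using risk_formula_strict_above_k2[OF assms] Rmu_eq_risk_formula[OF n] by simp
  show ?thesis
    using risk below above admissible_D2_if_between[OF assms] not_admissible_D2_outside[OF assms]
      Rmu_minimax_k2[OF assms]
    by blast
qed

end
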